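(* For a semi-abelian category $\mathcal C$ the following are equivalent: (i) every composite of two normal monomorphisms in $\mathcal C$ is a normal monomorphism; (ii) in $\mathcal C$, every pushout of a normal monomorphism along a regular epimorphism is a monomorphism (necessarily normal).
   Context: Semi-abelian category: pointed, Barr-exact, protomodular, with binary coproducts. A normal monomorphism is a kernel of some morphism; a regular epimorphism is a coequaliser of some pair (in this context, a cokernel). *)

theory Defs
  imports Main
begin

record ('o, 'a) cat =
  Obj  :: "'o set"
  Arr  :: "'a set"
  Dom  :: "'a \<Rightarrow> 'o"
  Cod  :: "'a \<Rightarrow> 'o"
  Idt  :: "'o \<Rightarrow> 'a"
  Comp :: "'a \<Rightarrow> 'a \<Rightarrow> 'a"   (* Comp C g f = g o f, meaningful when Cod f = Dom g *)

definition hom :: "('o, 'a) cat \<Rightarrow> 'o \<Rightarrow> 'o \<Rightarrow> 'a set" where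
  "hom C x y = {f \<in> Arr C. Dom C f = x \<and> Cod C f = y}"

definition category :: "('o, 'a) cat \<Rightarrow> bool" where
  "category C \<longleftrightarrow>
     (\<forall>f \<in> Arr C. Dom C f \<in> Obj C \<and> Cod C f \<in> Obj C) \<and>
     (\<forall>x \<in> Obj C. Idt C x \<in> hom C x x) \<and>
     (\<forall>f \<in> Arr C. \<forall>g \<in> Arr C. Cod C f = Dom C g \<longrightarrow>
        Comp C g f \<in> hom C (Dom C f) (Cod C g)) \<and>
     (\<forall>f \<in> Arr C. \<forall>g \<in> Arr C. \<forall>h \<in> Arr C. Cod C f = Dom C g \<longrightarrow> Cod C g = Dom C h \<longrightarrow>
        Comp C h (Comp C g f) = Comp C (Comp C h g) f) \<and>
     (\<forall>f \<in> Arr C. Comp C f (Idt C (Dom C f)) = f \<and> Comp C (Idt C (Cod C f)) f = f)"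

definition cat_mono :: "('o, 'a) cat \<Rightarrow> 'a \<Rightarrow> bool" where
  "cat_mono C m \<longleftrightarrow> m \<in> Arr C \<and>
     (\<forall>x \<in> Obj C. \<forall>f \<in> hom C x (Dom C m). \<forall>g \<in> hom C x (Dom C m).
        Comp C m f = Comp C m g \<longrightarrow> f = g)"

definition iso :: "('o, 'a) cat \<Rightarrow> 'a \<Rightarrow> bool" where
  "iso C f \<longleftrightarrow> f \<in> Arr C \<and>
     (\<exists>g \<in> hom C (Cod C f) (Dom C f).
        Comp C g f = Idt C (Dom C f) \<and> Comp C f g = Idt C (Cod C f))"

definition terminal_obj :: "('o, 'a) cat \<Rightarrow> 'o \<Rightarrow> bool" where
  "terminal_obj C z \<longleftrightarrow> z \<in> Obj C \<and> (\<forall>x \<in> Obj C. \<exists>!f. f \<in> hom C x z)"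

definition initial_obj :: "('o, 'a) cat \<Rightarrow> 'o \<Rightarrow> bool" where
  "initial_obj C z \<longleftrightarrow> z \<in> Obj C \<and> (\<forall>x \<in> Obj C. \<exists>!f. f \<in> hom C z x)"

definition zero_obj :: "('o, 'a) cat \<Rightarrow> 'o \<Rightarrow> bool" where
  "zero_obj C z \<longleftrightarrow> terminal_obj C z \<and> initial_obj C z"

definition pointed :: "('o, 'a) cat \<Rightarrow> bool" where
  "pointed C \<longleftrightarrow> (\<exists>z. zero_obj C z)"

definition zero_arr :: "('o, 'a) cat \<Rightarrow> 'a \<Rightarrow> bool" where
  "zero_arr C f \<longleftrightarrow> f \<in> Arr C \<and>
     (\<exists>z u v. zero_obj C z \<and> u \<in> hom C (Dom C f) z \<and> v \<in> hom C z (Cod C f) \<and> f = Comp C v u)"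

definition is_kernel :: "('o, 'a) cat \<Rightarrow> 'a \<Rightarrow> 'a \<Rightarrow> bool" where
  "is_kernel C k f \<longleftrightarrow> k \<in> Arr C \<and> f \<in> Arr C \<and> Cod C k = Dom C f \<and> zero_arr C (Comp C f k) \<and>
     (\<forall>g \<in> Arr C. Cod C g = Dom C f \<and> zero_arr C (Comp C f g) \<longrightarrow>
        (\<exists>!h. h \<in> hom C (Dom C g) (Dom C k) \<and> Comp C k h = g))"

definition normal_mono :: "('o, 'a) cat \<Rightarrow> 'a \<Rightarrow> bool" where
  "normal_mono C k \<longleftrightarrow> (\<exists>f. is_kernel C k f)"

definition is_coequalizer :: "('o, 'a) cat \<Rightarrow> 'a \<Rightarrow> 'a \<Rightarrow> 'a \<Rightarrow> bool" where
  "is_coequalizer C e u v \<longleftrightarrow> u \<in> Arr C \<and> v \<in> Arr C \<and> e \<in> Arr C \<and>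
     Dom C u = Dom C v \<and> Cod C u = Cod C v \<and> Dom C e = Cod C u \<and>
     Comp C e u = Comp C e v \<and>
     (\<forall>g \<in> Arr C. Dom C g = Cod C u \<and> Comp C g u = Comp C g v \<longrightarrow>
        (\<exists>!h. h \<in> hom C (Cod C e) (Cod C g) \<and> Comp C h e = g))"

definition regular_epi :: "('o, 'a) cat \<Rightarrow> 'a \<Rightarrow> bool" where
  "regular_epi C e \<longleftrightarrow> (\<exists>u v. is_coequalizer C e u v)"

definition is_pullback :: "('o, 'a) cat \<Rightarrow> 'a \<Rightarrow> 'a \<Rightarrow> 'a \<Rightarrow> 'a \<Rightarrow> bool" where
  "is_pullback C f g p q \<longleftrightarrow> f \<in> Arr C \<and> g \<in> Arr C \<and> p \<in> Arr C \<and> q \<in> Arr C \<and>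
     Cod C f = Cod C g \<and> Cod C p = Dom C f \<and> Cod C q = Dom C g \<and> Dom C p = Dom C q \<and>
     Comp C f p = Comp C g q \<and>
     (\<forall>x \<in> Obj C. \<forall>u \<in> hom C x (Dom C f). \<forall>v \<in> hom C x (Dom C g).
        Comp C f u = Comp C g v \<longrightarrow>
        (\<exists>!h. h \<in> hom C x (Dom C p) \<and> Comp C p h = u \<and> Comp C q h = v))"

text \<open>Pushout square: k : a \<rightarrow> b, e : a \<rightarrow> c, k' : c \<rightarrow> d, e' : b \<rightarrow> d, e' o k = k' o e
  (k' is the pushout of k along e).\<close>
definition is_pushout :: "('o, 'a) cat \<Rightarrow> 'a \<Rightarrow> 'a \<Rightarrow> 'a \<Rightarrow> 'a \<Rightarrow> bool" where
  "is_pushout C k e k' e' \<longleftrightarrow> k \<in> Arr C \<and> e \<in> Arr C \<and> k' \<in> Arr C \<and> e' \<in> Arr C \<and>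
     Dom C k = Dom C e \<and> Dom C k' = Cod C e \<and> Dom C e' = Cod C k \<and> Cod C k' = Cod C e' \<and>
     Comp C e' k = Comp C k' e \<and>
     (\<forall>x \<in> Obj C. \<forall>u \<in> hom C (Cod C k) x. \<forall>v \<in> hom C (Cod C e) x.
        Comp C u k = Comp C v e \<longrightarrow>
        (\<exists>!h. h \<in> hom C (Cod C k') x \<and> Comp C h e' = u \<and> Comp C h k' = v))"

definition is_coproduct :: "('o, 'a) cat \<Rightarrow> 'a \<Rightarrow> 'a \<Rightarrow> bool" where
  "is_coproduct C i1 i2 \<longleftrightarrow> i1 \<in> Arr C \<and> i2 \<in> Arr C \<and> Cod C i1 = Cod C i2 \<and>
     (\<forall>x \<in> Obj C. \<forall>u \<in> hom C (Dom C i1) x. \<forall>v \<in> hom C (Dom C i2) x.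
        (\<exists>!h. h \<in> hom C (Cod C i1) x \<and> Comp C h i1 = u \<and> Comp C h i2 = v))"

definition has_binary_coproducts :: "('o, 'a) cat \<Rightarrow> bool" where
  "has_binary_coproducts C \<longleftrightarrow>
     (\<forall>x \<in> Obj C. \<forall>y \<in> Obj C. \<exists>i1 i2. i1 \<in> hom C x (Cod C i1) \<and> i2 \<in> hom C y (Cod C i2) \<and>
        is_coproduct C i1 i2)"

definition finitely_complete :: "('o, 'a) cat \<Rightarrow> bool" where
  "finitely_complete C \<longleftrightarrow> (\<exists>t. terminal_obj C t) \<and>
     (\<forall>f \<in> Arr C. \<forall>g \<in> Arr C. Cod C f = Cod C g \<longrightarrow> (\<exists>p q. is_pullback C f g p q))"

definition regular_cat :: "('o, 'a) cat \<Rightarrow> bool" where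
  "regular_cat C \<longleftrightarrow> category C \<and> finitely_complete C \<and>
     (\<forall>f r1 r2. is_pullback C f f r1 r2 \<longrightarrow> (\<exists>e. is_coequalizer C e r1 r2)) \<and>
     (\<forall>f g p q. is_pullback C f g p q \<and> regular_epi C g \<longrightarrow> regular_epi C p)"

definition equiv_rel :: "('o, 'a) cat \<Rightarrow> 'a \<Rightarrow> 'a \<Rightarrow> bool" where
  "equiv_rel C r1 r2 \<longleftrightarrow> r1 \<in> Arr C \<and> r2 \<in> Arr C \<and>
     Dom C r1 = Dom C r2 \<and> Cod C r1 = Cod C r2 \<and>
     (\<forall>x \<in> Obj C. \<forall>u \<in> hom C x (Dom C r1). \<forall>v \<in> hom C x (Dom C r1).
        Comp C r1 u = Comp C r1 v \<and> Comp C r2 u = Comp C r2 v \<longrightarrow> u = v) \<and>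
     (\<exists>d \<in> hom C (Cod C r1) (Dom C r1).
        Comp C r1 d = Idt C (Cod C r1) \<and> Comp C r2 d = Idt C (Cod C r1)) \<and>
     (\<exists>s \<in> hom C (Dom C r1) (Dom C r1). Comp C r1 s = r2 \<and> Comp C r2 s = r1) \<and>
     (\<forall>p1 p2. is_pullback C r2 r1 p1 p2 \<longrightarrow>
        (\<exists>t \<in> hom C (Dom C p1) (Dom C r1).
           Comp C r1 t = Comp C r1 p1 \<and> Comp C r2 t = Comp C r2 p2))"

definition exact_cat :: "('o, 'a) cat \<Rightarrow> bool" where
  "exact_cat C \<longleftrightarrow> regular_cat C \<and>
     (\<forall>r1 r2. equiv_rel C r1 r2 \<longrightarrow> (\<exists>f. is_pullback C f f r1 r2))"

text \<open>Protomodularity (Bourn): every change-of-base functor between fibres of points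
  (split epimorphisms with chosen sections) along f : X \<rightarrow> Y reflects isomorphisms.\<close>
definition protomodular :: "('o, 'a) cat \<Rightarrow> bool" where
  "protomodular C \<longleftrightarrow>
     (\<forall>Y A B p s q t \<phi> f pA fA qB fB \<phi>'.
        p \<in> hom C A Y \<and> s \<in> hom C Y A \<and> Comp C p s = Idt C Y \<and>
        q \<in> hom C B Y \<and> t \<in> hom C Y B \<and> Comp C q t = Idt C Y \<and>
        \<phi> \<in> hom C A B \<and> Comp C q \<phi> = p \<and> Comp C \<phi> s = t \<and>
        f \<in> Arr C \<and> Cod C f = Y \<and>
        is_pullback C p f fA pA \<and> is_pullback C q f fB qB \<and>
        \<phi>' \<in> hom C (Dom C fA) (Dom C fB) \<and>
        Comp C fB \<phi>' = Comp C \<phi> fA \<and> Comp C qB \<phi>' = pA \<and>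
        iso C \<phi>'
        \<longrightarrow> iso C \<phi>)"

definition semi_abelian :: "('o, 'a) cat \<Rightarrow> bool" where
  "semi_abelian C \<longleftrightarrow> category C \<and> pointed C \<and> exact_cat C \<and> protomodular C \<and>
     has_binary_coproducts C"

end

theory Submission
  imports Defs
begin

text \<open>
  (i) implies (ii): let k : A \<rightarrow> B be normal and e : A \<rightarrow> E a regular epimorphism with kernel j.
  By (i), k j is normal, hence the kernel of its cokernel c : B \<rightarrow> D. Since e is the cokernel of j,
  c k = w e for some w : E \<rightarrow> D, and w has trivial kernel, so it is a monomorphism. The pushout k'
  of k along e satisfies h k' = w for some h, so k' is a monomorphism as well.

  (ii) implies (i): for normal k1 : A \<rightarrow> B and k2 : B \<rightarrow> E, let q1 be the cokernel of k1 and c that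
  of k2 k1. The square c k2 = c' q1 is a pushout of k2 along q1, so c' is a monomorphism by (ii),
  and then k2 k1 is the kernel of c.

  Protomodularity enters through the fact that the section and the kernel of a split epimorphism
  are jointly strongly epic. It makes morphisms with trivial kernel monic and regular epimorphisms
  the cokernels of their kernels, and (via the Mal'tsev property) it makes the reflexive relation
  on B generated by m : A \<rightarrow> B an equivalence relation, whose quotient is the cokernel of m.
\<close>

locale categorical =
  fixes C :: "('o, 'a) cat"
  assumes is_category: "category C"
begin

lemma hom_dom_obj: "f \<in> hom C X Y \<Longrightarrow> X \<in> Obj C"
  using is_category by (auto simp: category_def hom_def)

lemma hom_cod_obj: "f \<in> hom C X Y \<Longrightarrow> Y \<in> Obj C"
  using is_category by (auto simp: category_def hom_def)

lemma comp_in_hom [intro]: "f \<in> hom C X Y \<Longrightarrow> g \<in> hom C Y Z \<Longrightarrow> Comp C g f \<in> hom C X Z"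
  using is_category unfolding category_def hom_def by auto

lemma comp_assoc:
  "f \<in> hom C X Y \<Longrightarrow> g \<in> hom C Y Z \<Longrightarrow> h \<in> hom C Z W \<Longrightarrow>
   Comp C h (Comp C g f) = Comp C (Comp C h g) f"
  using is_category unfolding category_def hom_def by auto

lemma id_in_hom [intro]: "X \<in> Obj C \<Longrightarrow> Idt C X \<in> hom C X X"
  using is_category unfolding category_def by auto

lemma comp_id_left [simp]: "f \<in> hom C X Y \<Longrightarrow> Comp C (Idt C Y) f = f"
  using is_category unfolding category_def hom_def by auto

lemma comp_id_right [simp]: "f \<in> hom C X Y \<Longrightarrow> Comp C f (Idt C X) = f"
  using is_category unfolding category_def hom_def by auto

lemma cat_monoD:
  "cat_mono C m \<Longrightarrow> m \<in> hom C Y Z \<Longrightarrow> f \<in> hom C X Y \<Longrightarrow> g \<in> hom C X Y \<Longrightarrow>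
   Comp C m f = Comp C m g \<Longrightarrow> f = g"
  unfolding cat_mono_def using hom_dom_obj by (auto simp: hom_def)

lemma cat_monoI:
  "m \<in> hom C Y Z \<Longrightarrow>
   (\<And>X f g. f \<in> hom C X Y \<Longrightarrow> g \<in> hom C X Y \<Longrightarrow> Comp C m f = Comp C m g \<Longrightarrow> f = g) \<Longrightarrow>
   cat_mono C m"
  unfolding cat_mono_def by (auto simp: hom_def)

lemma cat_mono_comp:
  assumes m: "cat_mono C m" "m \<in> hom C X Y" and n: "cat_mono C n" "n \<in> hom C Y Z"
  shows "cat_mono C (Comp C n m)"
proof (rule cat_monoI)
  show "Comp C n m \<in> hom C X Z" using m n by blast
  fix W f g assume f: "f \<in> hom C W X" and g: "g \<in> hom C W X"
    and "Comp C (Comp C n m) f = Comp C (Comp C n m) g"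
  then have "Comp C n (Comp C m f) = Comp C n (Comp C m g)"
    using comp_assoc[OF f m(2) n(2)] comp_assoc[OF g m(2) n(2)] by simp
  then have "Comp C m f = Comp C m g" using cat_monoD[OF n] f g m(2) by blast
  then show "f = g" using cat_monoD[OF m f g] by blast
qed

lemma cat_mono_cancel:
  assumes nm: "cat_mono C (Comp C n m)" and m: "m \<in> hom C X Y" and n: "n \<in> hom C Y Z"
  shows "cat_mono C m"
proof (rule cat_monoI[OF m])
  fix W f g assume f: "f \<in> hom C W X" and g: "g \<in> hom C W X" and "Comp C m f = Comp C m g"
  then have "Comp C (Comp C n m) f = Comp C (Comp C n m) g"
    using comp_assoc[OF f m n] comp_assoc[OF g m n] by simp
  then show "f = g" using cat_monoD[OF nm _ f g] m n by blast
qed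

definition epi :: "'a \<Rightarrow> bool" where
  "epi e \<longleftrightarrow> e \<in> Arr C \<and>
     (\<forall>Z f g. f \<in> hom C (Cod C e) Z \<longrightarrow> g \<in> hom C (Cod C e) Z \<longrightarrow>
        Comp C f e = Comp C g e \<longrightarrow> f = g)"

lemma epiD:
  "epi e \<Longrightarrow> e \<in> hom C X Y \<Longrightarrow> f \<in> hom C Y Z \<Longrightarrow> g \<in> hom C Y Z \<Longrightarrow>
   Comp C f e = Comp C g e \<Longrightarrow> f = g"
  unfolding epi_def by (auto simp: hom_def)

lemma epi_comp:
  assumes e1: "epi e1" "e1 \<in> hom C X Y" and e2: "epi e2" "e2 \<in> hom C Y Z"
  shows "epi (Comp C e2 e1)"
  unfolding epi_def
proof (intro conjI allI impI)
  have c: "Comp C e2 e1 \<in> hom C X Z" using e1 e2 by blast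
  then show "Comp C e2 e1 \<in> Arr C" by (simp add: hom_def)
  fix W f g assume "f \<in> hom C (Cod C (Comp C e2 e1)) W" "g \<in> hom C (Cod C (Comp C e2 e1)) W"
    and fg: "Comp C f (Comp C e2 e1) = Comp C g (Comp C e2 e1)"
  then have f: "f \<in> hom C Z W" and g: "g \<in> hom C Z W" using c by (auto simp: hom_def)
  have "Comp C (Comp C f e2) e1 = Comp C (Comp C g e2) e1"
    using fg comp_assoc[OF e1(2) e2(2) f] comp_assoc[OF e1(2) e2(2) g] by simp
  then have "Comp C f e2 = Comp C g e2" using epiD[OF e1] e2(2) f g by blast
  then show "f = g" using epiD[OF e2 f g] by blast
qed

lemma coequalizer_universal:
  assumes co: "is_coequalizer C e u v" and g: "g \<in> hom C (Cod C u) Z"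
    and gu: "Comp C g u = Comp C g v"
  shows "\<exists>!h. h \<in> hom C (Cod C e) Z \<and> Comp C h e = g"
proof -
  have "\<forall>g \<in> Arr C. Dom C g = Cod C u \<and> Comp C g u = Comp C g v \<longrightarrow>
      (\<exists>!h. h \<in> hom C (Cod C e) (Cod C g) \<and> Comp C h e = g)"
    using co unfolding is_coequalizer_def by blast
  moreover have "g \<in> Arr C" "Dom C g = Cod C u" and Z: "Cod C g = Z" using g by (simp_all add: hom_def)
  ultimately have "\<exists>!h. h \<in> hom C (Cod C e) (Cod C g) \<and> Comp C h e = g" using gu by blast
  then show ?thesis unfolding Z .
qed

lemma coequalizer_factor:
  assumes co: "is_coequalizer C e u v" and e: "e \<in> hom C A E"
    and g: "g \<in> hom C A Z" and gu: "Comp C g u = Comp C g v"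
  shows "\<exists>h \<in> hom C E Z. Comp C h e = g"
proof -
  have "Cod C u = A" using co e by (simp add: is_coequalizer_def hom_def)
  then show ?thesis using coequalizer_universal[OF co _ gu] e g by (auto simp: hom_def)
qed

lemma coequalizer_epi:
  assumes co: "is_coequalizer C e u v"
  shows "epi e"
  unfolding epi_def
proof (intro conjI allI impI)
  show "e \<in> Arr C" using co by (simp add: is_coequalizer_def)
  fix Z f g assume f: "f \<in> hom C (Cod C e) Z" and g: "g \<in> hom C (Cod C e) Z"
    and fg: "Comp C f e = Comp C g e"
  have e: "e \<in> hom C (Cod C u) (Cod C e)" and uv: "Comp C e u = Comp C e v"
    and u: "u \<in> hom C (Dom C u) (Cod C u)" and v: "v \<in> hom C (Dom C u) (Cod C u)"
    using co unfolding is_coequalizer_def by (auto simp: hom_def)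
  have "Comp C (Comp C f e) u = Comp C (Comp C f e) v"
    using uv comp_assoc[OF u e f] comp_assoc[OF v e f] by simp
  from coequalizer_universal[OF co comp_in_hom[OF e f] this] show "f = g" using f g fg by metis
qed

lemma regular_epi_epi: "regular_epi C e \<Longrightarrow> epi e"
  unfolding regular_epi_def using coequalizer_epi by blast

lemma isoI:
  "t \<in> hom C X Y \<Longrightarrow> s \<in> hom C Y X \<Longrightarrow> Comp C s t = Idt C X \<Longrightarrow> Comp C t s = Idt C Y \<Longrightarrow> iso C t"
  unfolding iso_def by (auto simp: hom_def)

lemma iso_inverse:
  "iso C t \<Longrightarrow> t \<in> hom C X Y \<Longrightarrow> \<exists>s \<in> hom C Y X. Comp C s t = Idt C X \<and> Comp C t s = Idt C Y"
  unfolding iso_def by (auto simp: hom_def)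

lemma pullback_commutes: "is_pullback C f g p q \<Longrightarrow> Comp C f p = Comp C g q"
  unfolding is_pullback_def by auto

lemma pullback_universal:
  "is_pullback C f g p q \<Longrightarrow> W \<in> Obj C \<Longrightarrow> u \<in> hom C W (Dom C f) \<Longrightarrow> v \<in> hom C W (Dom C g) \<Longrightarrow>
   Comp C f u = Comp C g v \<Longrightarrow> \<exists>!h. h \<in> hom C W (Dom C p) \<and> Comp C p h = u \<and> Comp C q h = v"
  unfolding is_pullback_def by blast

lemma pullback_lift:
  assumes pb: "is_pullback C f g p q" and f: "f \<in> hom C X Z" and g: "g \<in> hom C Y Z"
    and p: "p \<in> hom C P X" and u: "u \<in> hom C W X" and v: "v \<in> hom C W Y"
    and uv: "Comp C f u = Comp C g v"
  shows "\<exists>h \<in> hom C W P. Comp C p h = u \<and> Comp C q h = v"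
proof -
  have u': "u \<in> hom C W (Dom C f)" and v': "v \<in> hom C W (Dom C g)" and P: "Dom C p = P"
    using f g p u v by (auto simp: hom_def)
  from ex1_implies_ex[OF pullback_universal[OF pb hom_dom_obj[OF u] u' v' uv]] show ?thesis
    unfolding P by blast
qed

lemma pullback_maps_eqI:
  assumes pb: "is_pullback C f g p q" and p: "p \<in> hom C P X"
    and h1: "h1 \<in> hom C W P" and h2: "h2 \<in> hom C W P"
    and eq1: "Comp C p h1 = Comp C p h2" and eq2: "Comp C q h1 = Comp C q h2"
  shows "h1 = h2"
proof -
  have f: "f \<in> hom C (Dom C f) (Cod C f)" and g: "g \<in> hom C (Dom C g) (Cod C g)"
    and q: "q \<in> hom C P (Dom C g)" and p': "p \<in> hom C P (Dom C f)"
    using pb p unfolding is_pullback_def by (auto simp: hom_def)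
  have "Comp C f (Comp C p h1) = Comp C g (Comp C q h1)"
    using comp_assoc[OF h1 p' f] comp_assoc[OF h1 q g] pullback_commutes[OF pb] by simp
  from pullback_universal[OF pb hom_dom_obj[OF h1] comp_in_hom[OF h1 p'] comp_in_hom[OF h1 q] this]
  show ?thesis using h1 h2 eq1 eq2 p by (auto simp: hom_def)
qed

definition product_cone :: "'a \<Rightarrow> 'a \<Rightarrow> 'o \<Rightarrow> 'o \<Rightarrow> 'o \<Rightarrow> bool" where
  "product_cone p1 p2 P X Y \<longleftrightarrow> p1 \<in> hom C P X \<and> p2 \<in> hom C P Y \<and>
     (\<forall>W u v. u \<in> hom C W X \<longrightarrow> v \<in> hom C W Y \<longrightarrow>
        (\<exists>h \<in> hom C W P. Comp C p1 h = u \<and> Comp C p2 h = v)) \<and>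
     (\<forall>W h1 h2. h1 \<in> hom C W P \<longrightarrow> h2 \<in> hom C W P \<longrightarrow>
        Comp C p1 h1 = Comp C p1 h2 \<longrightarrow> Comp C p2 h1 = Comp C p2 h2 \<longrightarrow> h1 = h2)"

definition coproduct_cocone :: "'a \<Rightarrow> 'a \<Rightarrow> 'o \<Rightarrow> 'o \<Rightarrow> 'o \<Rightarrow> bool" where
  "coproduct_cocone i1 i2 S X Y \<longleftrightarrow> i1 \<in> hom C X S \<and> i2 \<in> hom C Y S \<and>
     (\<forall>Z u v. u \<in> hom C X Z \<longrightarrow> v \<in> hom C Y Z \<longrightarrow>
        (\<exists>h \<in> hom C S Z. Comp C h i1 = u \<and> Comp C h i2 = v)) \<and>
     (\<forall>Z h1 h2. h1 \<in> hom C S Z \<longrightarrow> h2 \<in> hom C S Z \<longrightarrow>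
        Comp C h1 i1 = Comp C h2 i1 \<longrightarrow> Comp C h1 i2 = Comp C h2 i2 \<longrightarrow> h1 = h2)"

definition jointly_monic :: "'a \<Rightarrow> 'a \<Rightarrow> bool" where
  "jointly_monic s1 s2 \<longleftrightarrow>
     (\<forall>W u v. u \<in> hom C W (Dom C s1) \<longrightarrow> v \<in> hom C W (Dom C s1) \<longrightarrow>
        Comp C s1 u = Comp C s1 v \<longrightarrow> Comp C s2 u = Comp C s2 v \<longrightarrow> u = v)"

lemma jointly_monicD:
  assumes jm: "jointly_monic s1 s2" and s1: "s1 \<in> hom C I X"
    and "u \<in> hom C W I" "v \<in> hom C W I" "Comp C s1 u = Comp C s1 v" "Comp C s2 u = Comp C s2 v"
  shows "u = v"
proof -
  have I: "Dom C s1 = I" using s1 by (simp add: hom_def)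
  show ?thesis using jm assms(3-) unfolding jointly_monic_def I by blast
qed

lemma jointly_monicI:
  assumes s1: "s1 \<in> hom C I X"
    and "\<And>W u v. u \<in> hom C W I \<Longrightarrow> v \<in> hom C W I \<Longrightarrow>
      Comp C s1 u = Comp C s1 v \<Longrightarrow> Comp C s2 u = Comp C s2 v \<Longrightarrow> u = v"
  shows "jointly_monic s1 s2"
proof -
  have I: "Dom C s1 = I" using s1 by (simp add: hom_def)
  show ?thesis using assms(2) unfolding jointly_monic_def I by blast
qed

lemma pullback_through_mono:
  assumes pb: "is_pullback C p f f' p'" and p: "p \<in> hom C A Y" and f: "f \<in> hom C X Y"
    and f': "f' \<in> hom C P A" and p': "p' \<in> hom C P X"
    and t: "t \<in> hom C T A" "cat_mono C t" and g: "g \<in> hom C P T" "Comp C t g = f'"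
  shows "is_pullback C (Comp C p t) f g p'"
  unfolding is_pullback_def
proof (intro conjI ballI impI)
  have pt: "Comp C p t \<in> hom C T Y" using t p by blast
  then show "Comp C p t \<in> Arr C" "f \<in> Arr C" "g \<in> Arr C" "p' \<in> Arr C"
    "Cod C (Comp C p t) = Cod C f" "Cod C g = Dom C (Comp C p t)" "Cod C p' = Dom C f" "Dom C g = Dom C p'"
    using f g p' by (auto simp: hom_def)
  show "Comp C (Comp C p t) g = Comp C f p'"
    using comp_assoc[OF g(1) t(1) p] g(2) pullback_commutes[OF pb] by simp
  fix W u v assume "W \<in> Obj C" and "u \<in> hom C W (Dom C (Comp C p t))" "v \<in> hom C W (Dom C f)"
    and uv: "Comp C (Comp C p t) u = Comp C f v"
  then have u: "u \<in> hom C W T" and v: "v \<in> hom C W X" using pt f by (auto simp: hom_def)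
  have "Comp C p (Comp C t u) = Comp C f v" using comp_assoc[OF u t(1) p] uv by simp
  then obtain h where h: "h \<in> hom C W P" "Comp C f' h = Comp C t u" "Comp C p' h = v"
    using pullback_lift[OF pb p f f' comp_in_hom[OF u t(1)] v] by blast
  have "Comp C t (Comp C g h) = Comp C t u" using comp_assoc[OF h(1) g(1) t(1)] g(2) h(2) by simp
  then have gh: "Comp C g h = u" using cat_monoD[OF t(2) t(1) comp_in_hom[OF h(1) g(1)] u] by blast
  show "\<exists>!h. h \<in> hom C W (Dom C g) \<and> Comp C g h = u \<and> Comp C p' h = v"
  proof (rule ex1I[of _ h])
    show "h \<in> hom C W (Dom C g) \<and> Comp C g h = u \<and> Comp C p' h = v" using h gh g by (auto simp: hom_def)
    fix h' assume "h' \<in> hom C W (Dom C g) \<and> Comp C g h' = u \<and> Comp C p' h' = v"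
    then have h': "h' \<in> hom C W P" "Comp C g h' = u" "Comp C p' h' = v" using g by (auto simp: hom_def)
    have "Comp C f' h' = Comp C f' h"
      using comp_assoc[OF h'(1) g(1) t(1)] g(2) h'(2) h(2) by simp
    moreover have "Comp C p' h' = Comp C p' h" using h'(3) h(3) by simp
    ultimately show "h' = h" by (rule pullback_maps_eqI[OF pb f' h'(1) h(1)])
  qed
qed

lemma coproduct_cocone_of_is_coproduct:
  assumes cp: "is_coproduct C i1 i2" and i1: "i1 \<in> hom C X S" and i2: "i2 \<in> hom C Y S"
  shows "coproduct_cocone i1 i2 S X Y"
proof -
  have dom_cod: "Dom C i1 = X" "Dom C i2 = Y" "Cod C i1 = S" using i1 i2 by (simp_all add: hom_def)
  have U: "\<forall>Z \<in> Obj C. \<forall>u \<in> hom C X Z. \<forall>v \<in> hom C Y Z.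
      \<exists>!h. h \<in> hom C S Z \<and> Comp C h i1 = u \<and> Comp C h i2 = v"
    using cp unfolding is_coproduct_def dom_cod by blast
  show ?thesis
    unfolding coproduct_cocone_def
  proof (intro conjI allI impI)
    show "i1 \<in> hom C X S" "i2 \<in> hom C Y S" by fact+
    fix Z u v assume "u \<in> hom C X Z" "v \<in> hom C Y Z"
    then show "\<exists>h \<in> hom C S Z. Comp C h i1 = u \<and> Comp C h i2 = v"
      using U hom_cod_obj by blast
  next
    fix Z h1 h2 assume h1: "h1 \<in> hom C S Z" and h2: "h2 \<in> hom C S Z"
      and eq: "Comp C h1 i1 = Comp C h2 i1" "Comp C h1 i2 = Comp C h2 i2"
    have "\<exists>!h. h \<in> hom C S Z \<and> Comp C h i1 = Comp C h1 i1 \<and> Comp C h i2 = Comp C h1 i2"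
      using U hom_cod_obj[OF h1] comp_in_hom[OF i1 h1] comp_in_hom[OF i2 h1] by blast
    then show "h1 = h2" using h1 h2 eq by auto
  qed
qed

lemma pushout_lift:
  assumes po: "is_pushout C k e k' e'" and k: "k \<in> hom C A B" and e: "e \<in> hom C A E"
    and k': "k' \<in> hom C E P" and u: "u \<in> hom C B Z" and v: "v \<in> hom C E Z"
    and uv: "Comp C u k = Comp C v e"
  shows "\<exists>h \<in> hom C P Z. Comp C h e' = u \<and> Comp C h k' = v"
proof -
  have "\<forall>x \<in> Obj C. \<forall>u \<in> hom C (Cod C k) x. \<forall>v \<in> hom C (Cod C e) x.
      Comp C u k = Comp C v e \<longrightarrow> (\<exists>!h. h \<in> hom C (Cod C k') x \<and> Comp C h e' = u \<and> Comp C h k' = v)"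
    using po unfolding is_pushout_def by blast
  moreover have "Cod C k = B" "Cod C e = E" "Cod C k' = P" using k e k' by (simp_all add: hom_def)
  ultimately have "\<exists>!h. h \<in> hom C P Z \<and> Comp C h e' = u \<and> Comp C h k' = v"
    using hom_cod_obj[OF u] u v uv by simp
  then show ?thesis by blast
qed

end

locale pointed_category = categorical C for C :: "('o, 'a) cat" +
  assumes pointed: "pointed C"
begin

definition the_zero :: 'o where
  "the_zero = (SOME z. zero_obj C z)"

lemma zero_obj_the_zero: "zero_obj C the_zero"
  using pointed unfolding pointed_def the_zero_def by (metis someI)

lemma the_zero_in_Obj [simp]: "the_zero \<in> Obj C"
  using zero_obj_the_zero by (simp add: zero_obj_def terminal_obj_def)

lemma to_zero_obj_unique: "zero_obj C z \<Longrightarrow> X \<in> Obj C \<Longrightarrow> \<exists>!f. f \<in> hom C X z"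
  by (simp add: zero_obj_def terminal_obj_def)

lemma from_zero_obj_unique: "zero_obj C z \<Longrightarrow> X \<in> Obj C \<Longrightarrow> \<exists>!f. f \<in> hom C z X"
  by (simp add: zero_obj_def initial_obj_def)

lemma to_the_zero_eq: "f \<in> hom C X the_zero \<Longrightarrow> g \<in> hom C X the_zero \<Longrightarrow> f = g"
  using to_zero_obj_unique[OF zero_obj_the_zero] hom_dom_obj by blast

definition zero_map :: "'o \<Rightarrow> 'o \<Rightarrow> 'a" where
  "zero_map X Y = Comp C (SOME v. v \<in> hom C the_zero Y) (SOME u. u \<in> hom C X the_zero)"

lemma zero_map_through_the_zero:
  assumes "X \<in> Obj C" "Y \<in> Obj C"
  obtains u v where "u \<in> hom C X the_zero" "v \<in> hom C the_zero Y" "zero_map X Y = Comp C v u"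
proof
  show "(SOME u. u \<in> hom C X the_zero) \<in> hom C X the_zero"
    using to_zero_obj_unique[OF zero_obj_the_zero assms(1)] by (metis someI)
  show "(SOME v. v \<in> hom C the_zero Y) \<in> hom C the_zero Y"
    using from_zero_obj_unique[OF zero_obj_the_zero assms(2)] by (metis someI)
qed (simp add: zero_map_def)

lemma zero_map_in_hom [intro]:
  assumes "X \<in> Obj C" "Y \<in> Obj C"
  shows "zero_map X Y \<in> hom C X Y"
proof -
  obtain u v where "u \<in> hom C X the_zero" "v \<in> hom C the_zero Y" "zero_map X Y = Comp C v u"
    by (rule zero_map_through_the_zero[OF assms])
  then show ?thesis by (simp add: comp_in_hom)
qed

lemma comp_through_zero_obj:
  assumes z: "zero_obj C z" and u: "u \<in> hom C X z" and v: "v \<in> hom C z Y"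
  shows "Comp C v u = zero_map X Y"
proof -
  obtain u0 v0 where u0: "u0 \<in> hom C X the_zero" and v0: "v0 \<in> hom C the_zero Y"
    and zm: "zero_map X Y = Comp C v0 u0"
    by (rule zero_map_through_the_zero[OF hom_dom_obj[OF u] hom_cod_obj[OF v]])
  obtain w where w: "w \<in> hom C z the_zero"
    using to_zero_obj_unique[OF zero_obj_the_zero hom_cod_obj[OF u]] by blast
  have "Comp C w u = u0" using to_the_zero_eq u0 comp_in_hom[OF u w] by blast
  moreover have "Comp C v0 w = v"
    using from_zero_obj_unique[OF z hom_cod_obj[OF v]] v comp_in_hom[OF w v0] by blast
  ultimately show ?thesis using comp_assoc[OF u w v0] zm by simp
qed

lemma zero_arr_iff_zero_map:
  assumes f: "f \<in> hom C X Y"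
  shows "zero_arr C f \<longleftrightarrow> f = zero_map X Y"
proof
  have dom_cod: "Dom C f = X" "Cod C f = Y" using f by (simp_all add: hom_def)
  assume "zero_arr C f"
  then obtain z u v where "zero_obj C z" "u \<in> hom C X z" "v \<in> hom C z Y" "f = Comp C v u"
    unfolding zero_arr_def dom_cod by blast
  then show "f = zero_map X Y" using comp_through_zero_obj by blast
next
  assume f0: "f = zero_map X Y"
  obtain u v where "u \<in> hom C X the_zero" "v \<in> hom C the_zero Y" "zero_map X Y = Comp C v u"
    by (rule zero_map_through_the_zero[OF hom_dom_obj[OF f] hom_cod_obj[OF f]])
  then show "zero_arr C f"
    unfolding zero_arr_def using f f0 zero_obj_the_zero by (auto simp: hom_def)
qed

lemma comp_zero_map_left [simp]:
  assumes g: "g \<in> hom C Y Z" and X: "X \<in> Obj C"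
  shows "Comp C g (zero_map X Y) = zero_map X Z"
proof -
  obtain u v where u: "u \<in> hom C X the_zero" and v: "v \<in> hom C the_zero Y"
    and "zero_map X Y = Comp C v u"
    by (rule zero_map_through_the_zero[OF X hom_dom_obj[OF g]])
  then show ?thesis
    using comp_assoc[OF u v g] comp_through_zero_obj[OF zero_obj_the_zero u comp_in_hom[OF v g]] by simp
qed

lemma comp_zero_map_right [simp]:
  assumes f: "f \<in> hom C X Y" and Z: "Z \<in> Obj C"
  shows "Comp C (zero_map Y Z) f = zero_map X Z"
proof -
  obtain u v where u: "u \<in> hom C Y the_zero" and v: "v \<in> hom C the_zero Z"
    and "zero_map Y Z = Comp C v u"
    by (rule zero_map_through_the_zero[OF hom_cod_obj[OF f] Z])
  then show ?thesis
    using comp_assoc[OF f u v] comp_through_zero_obj[OF zero_obj_the_zero comp_in_hom[OF f u] v] by simp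
qed

lemma cat_mono_comp_zero:
  assumes m: "cat_mono C m" "m \<in> hom C Y Z" and f: "f \<in> hom C X Y"
    and mf: "Comp C m f = zero_map X Z"
  shows "f = zero_map X Y"
proof -
  have "Comp C m (zero_map X Y) = zero_map X Z" using m(2) hom_dom_obj[OF f] by simp
  then show ?thesis
    using cat_monoD[OF m f zero_map_in_hom[OF hom_dom_obj[OF f] hom_cod_obj[OF f]]] mf by simp
qed

lemma epi_comp_zero:
  assumes e: "epi e" "e \<in> hom C X Y" and f: "f \<in> hom C Y Z"
    and fe: "Comp C f e = zero_map X Z"
  shows "f = zero_map Y Z"
proof -
  have "Comp C (zero_map Y Z) e = zero_map X Z" using e(2) hom_cod_obj[OF f] by simp
  then show ?thesis
    using epiD[OF e f zero_map_in_hom[OF hom_dom_obj[OF f] hom_cod_obj[OF f]]] fe by simp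
qed

lemma kernel_comp_zero:
  assumes ker: "is_kernel C k f" and k: "k \<in> hom C K X" and f: "f \<in> hom C X Y"
  shows "Comp C f k = zero_map K Y"
proof -
  have "zero_arr C (Comp C f k)" using ker by (simp add: is_kernel_def)
  then show ?thesis using zero_arr_iff_zero_map[OF comp_in_hom[OF k f]] by simp
qed

lemma kernel_universal:
  assumes ker: "is_kernel C k f" and g: "g \<in> hom C W (Dom C f)"
    and fg: "Comp C f g = zero_map W (Cod C f)"
  shows "\<exists>!h. h \<in> hom C W (Dom C k) \<and> Comp C k h = g"
proof -
  have U: "\<forall>g \<in> Arr C. Cod C g = Dom C f \<and> zero_arr C (Comp C f g) \<longrightarrow>
      (\<exists>!h. h \<in> hom C (Dom C g) (Dom C k) \<and> Comp C k h = g)"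
    using ker unfolding is_kernel_def by blast
  have f: "f \<in> hom C (Dom C f) (Cod C f)" using ker by (simp add: is_kernel_def hom_def)
  have "zero_arr C (Comp C f g)" using fg zero_arr_iff_zero_map[OF comp_in_hom[OF g f]] by simp
  moreover have "g \<in> Arr C" "Cod C g = Dom C f" and W: "Dom C g = W" using g by (simp_all add: hom_def)
  ultimately have "\<exists>!h. h \<in> hom C (Dom C g) (Dom C k) \<and> Comp C k h = g" using U by blast
  then show ?thesis unfolding W .
qed

lemma kernel_lift:
  assumes ker: "is_kernel C k f" and k: "k \<in> hom C K X" and f: "f \<in> hom C X Y"
    and g: "g \<in> hom C W X" and fg: "Comp C f g = zero_map W Y"
  shows "\<exists>h \<in> hom C W K. Comp C k h = g"
proof -
  have "Dom C f = X" "Cod C f = Y" and K: "Dom C k = K" using k f by (simp_all add: hom_def)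
  then have "g \<in> hom C W (Dom C f)" "Comp C f g = zero_map W (Cod C f)" using g fg by simp_all
  from ex1_implies_ex[OF kernel_universal[OF ker this]] show ?thesis unfolding K by blast
qed

lemma kernel_mono:
  assumes ker: "is_kernel C k f"
  shows "cat_mono C k"
proof -
  have k: "k \<in> hom C (Dom C k) (Dom C f)" and f: "f \<in> hom C (Dom C f) (Cod C f)"
    using ker by (auto simp: is_kernel_def hom_def)
  show ?thesis
  proof (rule cat_monoI[OF k])
    fix W h1 h2 assume h1: "h1 \<in> hom C W (Dom C k)" and h2: "h2 \<in> hom C W (Dom C k)"
      and eq: "Comp C k h1 = Comp C k h2"
    have "Comp C f (Comp C k h1) = zero_map W (Cod C f)"
      using comp_assoc[OF h1 k f] kernel_comp_zero[OF ker k f] comp_zero_map_right[OF h1 hom_cod_obj[OF f]]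
      by simp
    then show "h1 = h2" using kernel_universal[OF ker comp_in_hom[OF h1 k]] h1 h2 eq by auto
  qed
qed

lemma is_kernelI:
  assumes k: "k \<in> hom C K X" and f: "f \<in> hom C X Y" and m: "cat_mono C k"
    and fk: "Comp C f k = zero_map K Y"
    and lift: "\<And>W g. g \<in> hom C W X \<Longrightarrow> Comp C f g = zero_map W Y \<Longrightarrow> \<exists>h \<in> hom C W K. Comp C k h = g"
  shows "is_kernel C k f"
  unfolding is_kernel_def
proof (intro conjI ballI impI)
  show "k \<in> Arr C" "f \<in> Arr C" "Cod C k = Dom C f" using k f by (auto simp: hom_def)
  show "zero_arr C (Comp C f k)" using fk zero_arr_iff_zero_map[OF comp_in_hom[OF k f]] by simp
  fix g assume "g \<in> Arr C" and "Cod C g = Dom C f \<and> zero_arr C (Comp C f g)"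
  then have g: "g \<in> hom C (Dom C g) X" and "zero_arr C (Comp C f g)" using f by (auto simp: hom_def)
  then have "Comp C f g = zero_map (Dom C g) Y" using zero_arr_iff_zero_map[OF comp_in_hom[OF g f]] by simp
  then obtain h where h: "h \<in> hom C (Dom C g) K" "Comp C k h = g" using lift g by blast
  show "\<exists>!h. h \<in> hom C (Dom C g) (Dom C k) \<and> Comp C k h = g"
  proof
    show "h \<in> hom C (Dom C g) (Dom C k) \<and> Comp C k h = g" using h k by (auto simp: hom_def)
    fix h' assume "h' \<in> hom C (Dom C g) (Dom C k) \<and> Comp C k h' = g"
    then show "h' = h" using cat_monoD[OF m k] h k by (auto simp: hom_def)
  qed
qed

lemma normal_monoE:
  assumes "normal_mono C k"
  obtains f where "is_kernel C k f" "k \<in> hom C (Dom C k) (Cod C k)" "f \<in> hom C (Cod C k) (Cod C f)"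
proof -
  obtain f where ker: "is_kernel C k f" using assms unfolding normal_mono_def by blast
  then have "k \<in> Arr C" "f \<in> Arr C" "Cod C k = Dom C f" unfolding is_kernel_def by simp_all
  then show thesis using that[OF ker] by (simp add: hom_def)
qed

definition is_cokernel :: "'a \<Rightarrow> 'a \<Rightarrow> 'o \<Rightarrow> 'o \<Rightarrow> 'o \<Rightarrow> bool" where
  "is_cokernel q m A B Q \<longleftrightarrow> m \<in> hom C A B \<and> q \<in> hom C B Q \<and> Comp C q m = zero_map A Q \<and> epi q \<and>
     (\<forall>Z g. g \<in> hom C B Z \<longrightarrow> Comp C g m = zero_map A Z \<longrightarrow> (\<exists>h \<in> hom C Q Z. Comp C h q = g))"

lemma cokernel_factor:
  "is_cokernel q m A B Q \<Longrightarrow> g \<in> hom C B Z \<Longrightarrow> Comp C g m = zero_map A Z \<Longrightarrow>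
   \<exists>h \<in> hom C Q Z. Comp C h q = g"
  unfolding is_cokernel_def by blast

lemma cokernel_regular_epi:
  assumes ck: "is_cokernel q m A B Q"
  shows "regular_epi C q"
proof -
  have m: "m \<in> hom C A B" and q: "q \<in> hom C B Q" and qm: "Comp C q m = zero_map A Q"
    and ep: "epi q"
    using ck unfolding is_cokernel_def by auto
  have A: "A \<in> Obj C" and B: "B \<in> Obj C" using m hom_dom_obj hom_cod_obj by blast+
  have z: "zero_map A B \<in> hom C A B" using A B by blast
  have "is_coequalizer C q m (zero_map A B)"
    unfolding is_coequalizer_def
  proof (intro conjI ballI impI)
    show "m \<in> Arr C" "zero_map A B \<in> Arr C" "q \<in> Arr C" "Dom C m = Dom C (zero_map A B)"
      "Cod C m = Cod C (zero_map A B)" "Dom C q = Cod C m"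
      using m z q by (auto simp: hom_def)
    show "Comp C q m = Comp C q (zero_map A B)" using qm q A by simp
    fix g assume "g \<in> Arr C" and gm: "Dom C g = Cod C m \<and> Comp C g m = Comp C g (zero_map A B)"
    then have g: "g \<in> hom C B (Cod C g)" using m by (auto simp: hom_def)
    then have "Comp C g m = zero_map A (Cod C g)" using gm comp_zero_map_left[OF g A] by simp
    then obtain h where h: "h \<in> hom C Q (Cod C g)" "Comp C h q = g"
      using cokernel_factor[OF ck g] by blast
    show "\<exists>!h. h \<in> hom C (Cod C q) (Cod C g) \<and> Comp C h q = g"
    proof
      show "h \<in> hom C (Cod C q) (Cod C g) \<and> Comp C h q = g" using h q by (auto simp: hom_def)
      fix h' assume "h' \<in> hom C (Cod C q) (Cod C g) \<and> Comp C h' q = g"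
      then show "h' = h" using epiD[OF ep q] h q by (auto simp: hom_def)
    qed
  qed
  then show ?thesis unfolding regular_epi_def by blast
qed

lemma kernel_of_cokernel_lift:
  assumes ker: "is_kernel C n f" and n: "n \<in> hom C K B" and ck: "is_cokernel c n K B D"
    and g: "g \<in> hom C W B" and cg: "Comp C c g = zero_map W D"
  shows "\<exists>y \<in> hom C W K. Comp C n y = g"
proof -
  have f: "f \<in> hom C B (Cod C f)" using ker n unfolding is_kernel_def by (auto simp: hom_def)
  have c: "c \<in> hom C B D" using ck unfolding is_cokernel_def by auto
  obtain t where t: "t \<in> hom C D (Cod C f)" "Comp C t c = f"
    using cokernel_factor[OF ck f] kernel_comp_zero[OF ker n f] by blast
  have "Comp C f g = zero_map W (Cod C f)"
    using t comp_assoc[OF g c t(1)] cg hom_dom_obj[OF g] by simp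
  then show ?thesis using kernel_lift[OF ker n f g] by blast
qed

lemma cokernel_from_relation:
  assumes cp: "coproduct_cocone i1 i2 S B A" and m: "m \<in> hom C A B"
    and a: "a \<in> hom C S B" "Comp C a i1 = Idt C B" "Comp C a i2 = m"
    and b: "b \<in> hom C S B" "Comp C b i1 = Idt C B" "Comp C b i2 = zero_map A B"
    and r: "r \<in> hom C S I" "epi r" and s1: "s1 \<in> hom C I B" "Comp C s1 r = a"
    and s2: "s2 \<in> hom C I B" "Comp C s2 r = b"
    and co: "is_coequalizer C q s1 s2" and q: "q \<in> hom C B Q"
  shows "is_cokernel q m A B Q"
  unfolding is_cokernel_def
proof (intro conjI allI impI)
  have i1: "i1 \<in> hom C B S" and i2: "i2 \<in> hom C A S" using cp unfolding coproduct_cocone_def by auto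
  have A: "A \<in> Obj C" using m hom_dom_obj by blast
  have qs: "Comp C q s1 = Comp C q s2" using co unfolding is_coequalizer_def by simp
  show "m \<in> hom C A B" "q \<in> hom C B Q" by fact+
  show "epi q" using coequalizer_epi[OF co] .
  have "Comp C q m = Comp C (Comp C q s1) (Comp C r i2)"
    using comp_assoc[OF i2 r(1) s1(1)] comp_assoc[OF comp_in_hom[OF i2 r(1)] s1(1) q] s1(2) a(3) by simp
  also have "\<dots> = Comp C q (Comp C b i2)"
    using qs comp_assoc[OF comp_in_hom[OF i2 r(1)] s2(1) q] comp_assoc[OF i2 r(1) s2(1)] s2(2) by simp
  also have "\<dots> = zero_map A Q" using b(3) q A by simp
  finally show "Comp C q m = zero_map A Q" .
  fix Z g assume g: "g \<in> hom C B Z" and gm: "Comp C g m = zero_map A Z"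
  have "Comp C (Comp C g a) i1 = Comp C (Comp C g b) i1"
    using comp_assoc[OF i1 a(1) g] comp_assoc[OF i1 b(1) g] a b g by simp
  moreover have "Comp C (Comp C g a) i2 = Comp C (Comp C g b) i2"
    using comp_assoc[OF i2 a(1) g] comp_assoc[OF i2 b(1) g] a b g gm A by simp
  ultimately have "Comp C g a = Comp C g b"
    using cp comp_in_hom[OF a(1) g] comp_in_hom[OF b(1) g] unfolding coproduct_cocone_def by blast
  then have "Comp C (Comp C g s1) r = Comp C (Comp C g s2) r"
    using comp_assoc[OF r(1) s1(1) g] comp_assoc[OF r(1) s2(1) g] s1(2) s2(2) by simp
  then have "Comp C g s1 = Comp C g s2"
    using epiD[OF r(2) r(1) comp_in_hom[OF s1(1) g] comp_in_hom[OF s2(1) g]] by blast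
  then show "\<exists>h \<in> hom C Q Z. Comp C h q = g" using coequalizer_factor[OF co q g] by blast
qed

lemma cokernel_comp_pushout:
  assumes k1: "k1 \<in> hom C A B" and k2: "k2 \<in> hom C B E"
    and ck1: "is_cokernel q1 k1 A B Q" and ck: "is_cokernel c (Comp C k2 k1) A E D"
    and c': "c' \<in> hom C Q D" "Comp C c' q1 = Comp C c k2"
  shows "is_pushout C k2 q1 c' c"
  unfolding is_pushout_def
proof (intro conjI ballI impI)
  have q1: "q1 \<in> hom C B Q" and q1k1: "Comp C q1 k1 = zero_map A Q" and epi_q1: "epi q1"
    and c: "c \<in> hom C E D" and epi_c: "epi c"
    using ck1 ck unfolding is_cokernel_def by auto
  have A: "A \<in> Obj C" using k1 hom_dom_obj by blast
  show "k2 \<in> Arr C" "q1 \<in> Arr C" "c' \<in> Arr C" "c \<in> Arr C" "Dom C k2 = Dom C q1"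
    "Dom C c' = Cod C q1" "Dom C c = Cod C k2" "Cod C c' = Cod C c"
    using k2 q1 c' c by (auto simp: hom_def)
  show "Comp C c k2 = Comp C c' q1" using c' by simp
  fix x u v assume "x \<in> Obj C" "u \<in> hom C (Cod C k2) x" "v \<in> hom C (Cod C q1) x"
    and uv: "Comp C u k2 = Comp C v q1"
  then have u: "u \<in> hom C E x" and v: "v \<in> hom C Q x" using k2 q1 by (auto simp: hom_def)
  have "Comp C u (Comp C k2 k1) = zero_map A x"
    using comp_assoc[OF k1 k2 u] uv comp_assoc[OF k1 q1 v] q1k1 v A by simp
  then obtain h where h: "h \<in> hom C D x" "Comp C h c = u" using cokernel_factor[OF ck u] by blast
  have "Comp C (Comp C h c') q1 = Comp C v q1"
    using comp_assoc[OF q1 c'(1) h(1)] c'(2) comp_assoc[OF k2 c h(1)] h(2) uv by simp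
  then have hv: "Comp C h c' = v" using epiD[OF epi_q1 q1 comp_in_hom[OF c'(1) h(1)] v] by blast
  show "\<exists>!h. h \<in> hom C (Cod C c') x \<and> Comp C h c = u \<and> Comp C h c' = v"
  proof
    show "h \<in> hom C (Cod C c') x \<and> Comp C h c = u \<and> Comp C h c' = v" using h hv c' by (auto simp: hom_def)
    fix h' assume "h' \<in> hom C (Cod C c') x \<and> Comp C h' c = u \<and> Comp C h' c' = v"
    then show "h' = h" using epiD[OF epi_c c] h c' by (auto simp: hom_def)
  qed
qed

end

locale finitely_complete_category = categorical C for C :: "('o, 'a) cat" +
  assumes finitely_complete: "finitely_complete C"
begin

lemma pullback_exists:
  assumes f: "f \<in> hom C X Z" and g: "g \<in> hom C Y Z"
  obtains P p q where "is_pullback C f g p q" "p \<in> hom C P X" "q \<in> hom C P Y"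
proof -
  have "f \<in> Arr C" "g \<in> Arr C" "Cod C f = Cod C g" using f g by (simp_all add: hom_def)
  then obtain p q where pb: "is_pullback C f g p q"
    using finitely_complete unfolding finitely_complete_def by blast
  then have "p \<in> hom C (Dom C p) X" "q \<in> hom C (Dom C p) Y"
    using f g unfolding is_pullback_def hom_def by auto
  then show thesis using that[OF pb] by blast
qed

lemma product_exists:
  assumes X: "X \<in> Obj C" and Y: "Y \<in> Obj C"
  obtains P p1 p2 where "product_cone p1 p2 P X Y"
proof -
  obtain t where "terminal_obj C t" using finitely_complete unfolding finitely_complete_def by blast
  then have to_t: "\<And>W. W \<in> Obj C \<Longrightarrow> \<exists>!f. f \<in> hom C W t" by (simp add: terminal_obj_def)
  obtain tX tY where tX: "tX \<in> hom C X t" and tY: "tY \<in> hom C Y t" using to_t X Y by metis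
  obtain P p1 p2 where pb: "is_pullback C tX tY p1 p2"
    and p1: "p1 \<in> hom C P X" and p2: "p2 \<in> hom C P Y"
    by (rule pullback_exists[OF tX tY])
  have "product_cone p1 p2 P X Y"
    unfolding product_cone_def
  proof (intro conjI allI impI)
    show "p1 \<in> hom C P X" "p2 \<in> hom C P Y" by fact+
    fix W u v assume u: "u \<in> hom C W X" and v: "v \<in> hom C W Y"
    have "Comp C tX u = Comp C tY v" using to_t[OF hom_dom_obj[OF u]] u v tX tY comp_in_hom by blast
    then show "\<exists>h \<in> hom C W P. Comp C p1 h = u \<and> Comp C p2 h = v"
      using pullback_lift[OF pb tX tY p1 u v] by blast
  next
    fix W h1 h2 assume "h1 \<in> hom C W P" "h2 \<in> hom C W P"
      "Comp C p1 h1 = Comp C p1 h2" "Comp C p2 h1 = Comp C p2 h2"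
    then show "h1 = h2" using pullback_maps_eqI[OF pb p1] by blast
  qed
  then show thesis by (rule that)
qed

lemma equalizer_exists:
  assumes g1: "g1 \<in> hom C A Z" and g2: "g2 \<in> hom C A Z"
  obtains E e where "e \<in> hom C E A" "cat_mono C e" "Comp C g1 e = Comp C g2 e"
    "\<And>W x. x \<in> hom C W A \<Longrightarrow> Comp C g1 x = Comp C g2 x \<Longrightarrow> \<exists>h \<in> hom C W E. Comp C e h = x"
proof -
  have A: "A \<in> Obj C" and Z: "Z \<in> Obj C" using g1 hom_dom_obj hom_cod_obj by blast+
  obtain P p1 p2 where pr: "product_cone p1 p2 P A Z" by (rule product_exists[OF A Z])
  have p1: "p1 \<in> hom C P A" and p2: "p2 \<in> hom C P Z" using pr unfolding product_cone_def by auto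
  obtain a1 where a1: "a1 \<in> hom C A P" "Comp C p1 a1 = Idt C A" "Comp C p2 a1 = g1"
    using pr id_in_hom[OF A] g1 unfolding product_cone_def by blast
  obtain a2 where a2: "a2 \<in> hom C A P" "Comp C p1 a2 = Idt C A" "Comp C p2 a2 = g2"
    using pr id_in_hom[OF A] g2 unfolding product_cone_def by blast
  obtain E e q where pb: "is_pullback C a1 a2 e q" and e: "e \<in> hom C E A" and q: "q \<in> hom C E A"
    by (rule pullback_exists[OF a1(1) a2(1)])
  have c: "Comp C a1 e = Comp C a2 q" using pullback_commutes[OF pb] .
  have "Comp C (Comp C p1 a1) e = Comp C (Comp C p1 a2) q"
    using comp_assoc[OF e a1(1) p1] comp_assoc[OF q a2(1) p1] c by simp
  then have eq: "e = q" using a1 a2 e q by simp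
  have "Comp C (Comp C p2 a1) e = Comp C (Comp C p2 a2) q"
    using comp_assoc[OF e a1(1) p2] comp_assoc[OF q a2(1) p2] c by simp
  then have ge: "Comp C g1 e = Comp C g2 e" using a1 a2 eq by simp
  have mono: "cat_mono C e"
  proof (rule cat_monoI[OF e])
    fix W h1 h2 assume "h1 \<in> hom C W E" "h2 \<in> hom C W E" "Comp C e h1 = Comp C e h2"
    then show "h1 = h2" using pullback_maps_eqI[OF pb e] eq by blast
  qed
  have "\<exists>h \<in> hom C W E. Comp C e h = x"
    if x: "x \<in> hom C W A" and gx: "Comp C g1 x = Comp C g2 x" for W x
  proof -
    have ax: "Comp C a1 x \<in> hom C W P" "Comp C a2 x \<in> hom C W P" using x a1 a2 by blast+
    have "Comp C p1 (Comp C a1 x) = Comp C p1 (Comp C a2 x)"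
      using comp_assoc[OF x a1(1) p1] comp_assoc[OF x a2(1) p1] a1 a2 by simp
    moreover have "Comp C p2 (Comp C a1 x) = Comp C p2 (Comp C a2 x)"
      using comp_assoc[OF x a1(1) p2] comp_assoc[OF x a2(1) p2] a1 a2 gx by simp
    ultimately have "Comp C a1 x = Comp C a2 x" using pr ax unfolding product_cone_def by blast
    then show ?thesis using pullback_lift[OF pb a1(1) a2(1) e x x] by blast
  qed
  then show thesis using that[OF e mono ge] by blast
qed

lemma kernel_pair_exists:
  assumes e: "e \<in> hom C A E"
  obtains R r1 r2 d where "is_pullback C e e r1 r2" "r1 \<in> hom C R A" "r2 \<in> hom C R A"
    "d \<in> hom C A R" "Comp C r1 d = Idt C A" "Comp C r2 d = Idt C A"
proof -
  obtain R r1 r2 where pb: "is_pullback C e e r1 r2" and r1: "r1 \<in> hom C R A" and r2: "r2 \<in> hom C R A"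
    by (rule pullback_exists[OF e e])
  have A: "A \<in> Obj C" using e hom_dom_obj by blast
  obtain d where "d \<in> hom C A R" "Comp C r1 d = Idt C A" "Comp C r2 d = Idt C A"
    using pullback_lift[OF pb e e r1 id_in_hom[OF A] id_in_hom[OF A]] by blast
  then show thesis using that[OF pb r1 r2] by blast
qed

lemma jointly_monic_preimage:
  assumes s1: "s1 \<in> hom C I X" and s2: "s2 \<in> hom C I Y" and jm: "jointly_monic s1 s2"
    and a: "a \<in> hom C D X" and b: "b \<in> hom C D Y"
  obtains T t r where "t \<in> hom C T D" "cat_mono C t" "r \<in> hom C T I"
    "Comp C s1 r = Comp C a t" "Comp C s2 r = Comp C b t"
    "\<And>W u v. u \<in> hom C W D \<Longrightarrow> v \<in> hom C W I \<Longrightarrow> Comp C s1 v = Comp C a u \<Longrightarrow>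
       Comp C s2 v = Comp C b u \<Longrightarrow> \<exists>h \<in> hom C W T. Comp C t h = u"
proof -
  obtain P p1 p2 where pr: "product_cone p1 p2 P X Y"
    by (rule product_exists[OF hom_cod_obj[OF s1] hom_cod_obj[OF s2]])
  have p1: "p1 \<in> hom C P X" and p2: "p2 \<in> hom C P Y"
    and pair: "\<And>W u v. u \<in> hom C W X \<Longrightarrow> v \<in> hom C W Y \<Longrightarrow>
       \<exists>h \<in> hom C W P. Comp C p1 h = u \<and> Comp C p2 h = v"
    and pair_eqI: "\<And>W h1 h2. h1 \<in> hom C W P \<Longrightarrow> h2 \<in> hom C W P \<Longrightarrow>
       Comp C p1 h1 = Comp C p1 h2 \<Longrightarrow> Comp C p2 h1 = Comp C p2 h2 \<Longrightarrow> h1 = h2"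
    using pr unfolding product_cone_def by blast+
  obtain i where i: "i \<in> hom C I P" "Comp C p1 i = s1" "Comp C p2 i = s2" using pair[OF s1 s2] by blast
  obtain k where k: "k \<in> hom C D P" "Comp C p1 k = a" "Comp C p2 k = b" using pair[OF a b] by blast
  have pair_eq: "Comp C k u = Comp C i v"
    if u: "u \<in> hom C W D" and v: "v \<in> hom C W I"
      and "Comp C s1 v = Comp C a u" "Comp C s2 v = Comp C b u" for W u v
    using pair_eqI[OF comp_in_hom[OF u k(1)] comp_in_hom[OF v i(1)]] that
      comp_assoc[OF u k(1) p1] comp_assoc[OF v i(1) p1] comp_assoc[OF u k(1) p2] comp_assoc[OF v i(1) p2]
      i k by simp
  obtain T t r where pb: "is_pullback C k i t r" and t: "t \<in> hom C T D" and r: "r \<in> hom C T I"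
    by (rule pullback_exists[OF k(1) i(1)])
  have ktir: "Comp C k t = Comp C i r" using pullback_commutes[OF pb] .
  have r1: "Comp C s1 r = Comp C a t" and r2: "Comp C s2 r = Comp C b t"
    using ktir comp_assoc[OF t k(1) p1] comp_assoc[OF r i(1) p1] comp_assoc[OF t k(1) p2]
      comp_assoc[OF r i(1) p2] i k by simp_all
  have mono: "cat_mono C t"
  proof (rule cat_monoI[OF t])
    fix W h1 h2 assume h1: "h1 \<in> hom C W T" and h2: "h2 \<in> hom C W T" and th: "Comp C t h1 = Comp C t h2"
    have "Comp C s1 (Comp C r h1) = Comp C s1 (Comp C r h2)"
      using comp_assoc[OF h1 r s1] comp_assoc[OF h2 r s1] comp_assoc[OF h1 t a] comp_assoc[OF h2 t a] r1 th
      by simp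
    moreover have "Comp C s2 (Comp C r h1) = Comp C s2 (Comp C r h2)"
      using comp_assoc[OF h1 r s2] comp_assoc[OF h2 r s2] comp_assoc[OF h1 t b] comp_assoc[OF h2 t b] r2 th
      by simp
    ultimately have "Comp C r h1 = Comp C r h2"
      using jointly_monicD[OF jm s1 comp_in_hom[OF h1 r] comp_in_hom[OF h2 r]] by blast
    then show "h1 = h2" using pullback_maps_eqI[OF pb t h1 h2 th] by blast
  qed
  show thesis
  proof (rule that[OF t mono r r1 r2])
    fix W u v assume "u \<in> hom C W D" "v \<in> hom C W I" "Comp C s1 v = Comp C a u" "Comp C s2 v = Comp C b u"
    then show "\<exists>h \<in> hom C W T. Comp C t h = u"
      using pullback_lift[OF pb k(1) i(1) t] pair_eq by blast
  qed
qed

end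

locale pointed_finitely_complete =
  pointed_category C + finitely_complete_category C for C :: "('o, 'a) cat"
begin

lemma kernel_exists:
  assumes f: "f \<in> hom C X Y"
  obtains K k where "k \<in> hom C K X" "is_kernel C k f"
proof -
  have Y: "Y \<in> Obj C" using f hom_cod_obj by blast
  have zY: "zero_map the_zero Y \<in> hom C the_zero Y" using zero_map_in_hom[OF the_zero_in_Obj Y] .
  obtain K p q where pb: "is_pullback C f (zero_map the_zero Y) p q"
    and p: "p \<in> hom C K X" and q: "q \<in> hom C K the_zero"
    by (rule pullback_exists[OF f zY])
  have fp: "Comp C f p = zero_map K Y" using pullback_commutes[OF pb] q Y by simp
  have mono: "cat_mono C p"
  proof (rule cat_monoI[OF p])
    fix W h1 h2 assume h: "h1 \<in> hom C W K" "h2 \<in> hom C W K" "Comp C p h1 = Comp C p h2"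
    have "Comp C q h1 = Comp C q h2" using to_the_zero_eq h q by blast
    then show "h1 = h2" using pullback_maps_eqI[OF pb p] h by blast
  qed
  have "is_kernel C p f"
  proof (rule is_kernelI[OF p f mono fp])
    fix W g assume g: "g \<in> hom C W X" and fg: "Comp C f g = zero_map W Y"
    have W: "W \<in> Obj C" using g hom_dom_obj by blast
    have "Comp C (zero_map the_zero Y) (zero_map W the_zero) = zero_map W Y" using zY W by simp
    then show "\<exists>h \<in> hom C W K. Comp C p h = g"
      using pullback_lift[OF pb f zY p g zero_map_in_hom[OF W the_zero_in_Obj]] fg by auto
  qed
  then show thesis using that[OF p] by blast
qed

end

locale regular_category = finitely_complete_category C for C :: "('o, 'a) cat" +
  assumes regular: "regular_cat C"
begin

lemma regular_epi_pullback: "is_pullback C f g p q \<Longrightarrow> regular_epi C g \<Longrightarrow> regular_epi C p"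
  using regular unfolding regular_cat_def by blast

lemma kernel_pair_coequalizer_exists: "is_pullback C f f r1 r2 \<Longrightarrow> \<exists>e. is_coequalizer C e r1 r2"
  using regular unfolding regular_cat_def by blast

lemma regular_epi_cover_pair:
  assumes r: "r \<in> hom C X I" "regular_epi C r" and x: "x \<in> hom C W I" and y: "y \<in> hom C W I"
  obtains V e x' y' where "e \<in> hom C V W" "epi e" "x' \<in> hom C V X" "y' \<in> hom C V X"
    "Comp C x e = Comp C r x'" "Comp C y e = Comp C r y'"
proof -
  obtain W1 e1 x1 where pb1: "is_pullback C x r e1 x1" and e1: "e1 \<in> hom C W1 W" and x1: "x1 \<in> hom C W1 X"
    by (rule pullback_exists[OF x r(1)])
  have ye1: "Comp C y e1 \<in> hom C W1 I" using e1 y by blast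
  obtain V e2 y' where pb2: "is_pullback C (Comp C y e1) r e2 y'"
    and e2: "e2 \<in> hom C V W1" and y': "y' \<in> hom C V X"
    by (rule pullback_exists[OF ye1 r(1)])
  have "epi (Comp C e1 e2)"
    using epi_comp[OF regular_epi_epi[OF regular_epi_pullback[OF pb2 r(2)]] e2
        regular_epi_epi[OF regular_epi_pullback[OF pb1 r(2)]] e1] .
  moreover have "Comp C x (Comp C e1 e2) = Comp C r (Comp C x1 e2)"
    using comp_assoc[OF e2 e1 x] pullback_commutes[OF pb1] comp_assoc[OF e2 x1 r(1)] by simp
  moreover have "Comp C y (Comp C e1 e2) = Comp C r y'"
    using comp_assoc[OF e2 e1 y] pullback_commutes[OF pb2] by simp
  ultimately show thesis using that[OF comp_in_hom[OF e2 e1] _ comp_in_hom[OF e2 x1] y'] by blast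
qed

lemma image_factorization:
  assumes g: "g \<in> hom C X Z"
  obtains I r i where "r \<in> hom C X I" "i \<in> hom C I Z" "Comp C i r = g" "regular_epi C r" "cat_mono C i"
proof -
  obtain R r1 r2 where kp: "is_pullback C g g r1 r2" and r1: "r1 \<in> hom C R X" and r2: "r2 \<in> hom C R X"
    by (rule pullback_exists[OF g g])
  obtain r where co: "is_coequalizer C r r1 r2" using kernel_pair_coequalizer_exists[OF kp] by blast
  have r: "r \<in> hom C X (Cod C r)" using co r1 unfolding is_coequalizer_def by (auto simp: hom_def)
  have rr: "regular_epi C r" using co unfolding regular_epi_def by blast
  have rr12: "Comp C r r1 = Comp C r r2" using co unfolding is_coequalizer_def by simp
  obtain i where i: "i \<in> hom C (Cod C r) Z" "Comp C i r = g"
    using coequalizer_factor[OF co r g pullback_commutes[OF kp]] by blast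
  have "cat_mono C i"
  proof (rule cat_monoI[OF i(1)])
    fix W x y assume x: "x \<in> hom C W (Cod C r)" and y: "y \<in> hom C W (Cod C r)" and ixy: "Comp C i x = Comp C i y"
    obtain V e x' y' where e: "e \<in> hom C V W" "epi e" and x': "x' \<in> hom C V X" and y': "y' \<in> hom C V X"
      and xe: "Comp C x e = Comp C r x'" and ye: "Comp C y e = Comp C r y'"
      by (rule regular_epi_cover_pair[OF r rr x y])
    have "Comp C g x' = Comp C i (Comp C x e)" using comp_assoc[OF x' r i(1)] i(2) xe by simp
    also have "\<dots> = Comp C i (Comp C y e)" using comp_assoc[OF e(1) x i(1)] comp_assoc[OF e(1) y i(1)] ixy by simp
    also have "\<dots> = Comp C g y'" using comp_assoc[OF y' r i(1)] i(2) ye by simp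
    finally obtain h where h: "h \<in> hom C V R" "Comp C r1 h = x'" "Comp C r2 h = y'"
      using pullback_lift[OF kp g g r1 x' y'] by blast
    have "Comp C x e = Comp C y e"
      using xe ye comp_assoc[OF h(1) r1 r] comp_assoc[OF h(1) r2 r] rr12 h by simp
    then show "x = y" using epiD[OF e(2) e(1) x y] by blast
  qed
  then show thesis using that[OF r i rr] by blast
qed

lemma jointly_monic_image:
  assumes a: "a \<in> hom C S B" and b: "b \<in> hom C S B"
  obtains I r s1 s2 where "r \<in> hom C S I" "epi r" "s1 \<in> hom C I B" "s2 \<in> hom C I B"
    "Comp C s1 r = a" "Comp C s2 r = b" "jointly_monic s1 s2"
proof -
  have B: "B \<in> Obj C" using a hom_cod_obj by blast
  obtain P p1 p2 where pr: "product_cone p1 p2 P B B" by (rule product_exists[OF B B])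
  have p1: "p1 \<in> hom C P B" and p2: "p2 \<in> hom C P B" using pr unfolding product_cone_def by auto
  obtain g where g: "g \<in> hom C S P" "Comp C p1 g = a" "Comp C p2 g = b"
    using pr a b unfolding product_cone_def by blast
  obtain I r i where r: "r \<in> hom C S I" and i: "i \<in> hom C I P" and ir: "Comp C i r = g"
    and rr: "regular_epi C r" and mi: "cat_mono C i"
    by (rule image_factorization[OF g(1)])
  have s1r: "Comp C (Comp C p1 i) r = a" and s2r: "Comp C (Comp C p2 i) r = b"
    using comp_assoc[OF r i p1] comp_assoc[OF r i p2] ir g by simp_all
  have "jointly_monic (Comp C p1 i) (Comp C p2 i)"
  proof (rule jointly_monicI[OF comp_in_hom[OF i p1]])
    fix W u v assume u: "u \<in> hom C W I" and v: "v \<in> hom C W I"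
      and "Comp C (Comp C p1 i) u = Comp C (Comp C p1 i) v" "Comp C (Comp C p2 i) u = Comp C (Comp C p2 i) v"
    then have "Comp C p1 (Comp C i u) = Comp C p1 (Comp C i v)" "Comp C p2 (Comp C i u) = Comp C p2 (Comp C i v)"
      using comp_assoc[OF u i p1] comp_assoc[OF v i p1] comp_assoc[OF u i p2] comp_assoc[OF v i p2] by simp_all
    then have "Comp C i u = Comp C i v"
      using pr comp_in_hom[OF u i] comp_in_hom[OF v i] unfolding product_cone_def by blast
    then show "u = v" using cat_monoD[OF mi i u v] by blast
  qed
  then show thesis
    using that[OF r regular_epi_epi[OF rr] comp_in_hom[OF i p1] comp_in_hom[OF i p2] s1r s2r] by blast
qed

end

locale pointed_protomodular = pointed_finitely_complete C for C :: "('o, 'a) cat" +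
  assumes protomodular: "protomodular C"
begin

text \<open>Protomodularity applied to the morphism of points t from (T, p \<circ> t, s0) to (A, p, s)
  over Y: its change of base along f is the identity of P.\<close>
lemma mono_through_section_and_pullback_iso:
  assumes p: "p \<in> hom C A Y" and s: "s \<in> hom C Y A" and ps: "Comp C p s = Idt C Y"
    and f: "f \<in> hom C X Y" and pb: "is_pullback C p f f' p'"
    and f': "f' \<in> hom C P A" and p': "p' \<in> hom C P X"
    and t: "t \<in> hom C T A" "cat_mono C t" and s0: "s0 \<in> hom C Y T" "Comp C t s0 = s"
    and g: "g \<in> hom C P T" "Comp C t g = f'"
  shows "iso C t"
proof -
  have pt: "Comp C p t \<in> hom C T Y" using t p by blast
  have pts0: "Comp C (Comp C p t) s0 = Idt C Y" using comp_assoc[OF s0(1) t(1) p] s0(2) ps by simp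
  have pbT: "is_pullback C (Comp C p t) f g p'" by (rule pullback_through_mono[OF pb p f f' p' t g])
  have P: "P \<in> Obj C" using f' hom_dom_obj by blast
  have "Idt C P \<in> hom C P P" using P by blast
  then have idP: "Idt C P \<in> hom C (Dom C g) (Dom C f')" "iso C (Idt C P)"
    using isoI[of "Idt C P" P P "Idt C P"] g f' by (simp_all add: hom_def)
  have "f \<in> Arr C" "Cod C f = Y" using f by (simp_all add: hom_def)
  then show ?thesis
    using protomodular[unfolded protomodular_def, rule_format,
        where Y=Y and A=T and B=A and p="Comp C p t" and s=s0 and q=p and t=s and \<phi>=t and f=f
          and fA=g and pA=p' and fB=f' and qB=p' and \<phi>'="Idt C P"]
      pt s0 pts0 p s ps t pbT pb idP f' p' g by simp
qed

lemma split_epi_section_kernel_jointly_epic: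
  assumes p: "p \<in> hom C A Y" and s: "s \<in> hom C Y A" and ps: "Comp C p s = Idt C Y"
    and g1: "g1 \<in> hom C A Z" and g2: "g2 \<in> hom C A Z" and g_s: "Comp C g1 s = Comp C g2 s"
    and g_ker: "\<And>W x. x \<in> hom C W A \<Longrightarrow> Comp C p x = zero_map W Y \<Longrightarrow> Comp C g1 x = Comp C g2 x"
  shows "g1 = g2"
proof -
  have Y: "Y \<in> Obj C" using p hom_cod_obj by blast
  have z: "zero_map the_zero Y \<in> hom C the_zero Y" using zero_map_in_hom[OF the_zero_in_Obj Y] .
  obtain P f' p' where pb: "is_pullback C p (zero_map the_zero Y) f' p'"
    and f': "f' \<in> hom C P A" and p': "p' \<in> hom C P the_zero"
    by (rule pullback_exists[OF p z])
  have "Comp C p f' = zero_map P Y" using pullback_commutes[OF pb] p' Y by simp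
  then have g_f': "Comp C g1 f' = Comp C g2 f'" using g_ker[OF f'] by blast
  obtain E e where e: "e \<in> hom C E A" "cat_mono C e" "Comp C g1 e = Comp C g2 e"
    and eq_lift: "\<And>W x. x \<in> hom C W A \<Longrightarrow> Comp C g1 x = Comp C g2 x \<Longrightarrow> \<exists>h \<in> hom C W E. Comp C e h = x"
    by (rule equalizer_exists[OF g1 g2]) blast
  obtain s0 where s0: "s0 \<in> hom C Y E" "Comp C e s0 = s" using eq_lift[OF s g_s] by blast
  obtain h where h: "h \<in> hom C P E" "Comp C e h = f'" using eq_lift[OF f' g_f'] by blast
  have "iso C e" by (rule mono_through_section_and_pullback_iso[OF p s ps z pb f' p' e(1,2) s0 h])
  then obtain e' where e': "e' \<in> hom C A E" "Comp C e e' = Idt C A" using iso_inverse[OF _ e(1)] by blast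
  have "g1 = Comp C (Comp C g1 e) e'" using comp_assoc[OF e'(1) e(1) g1] e'(2) g1 by simp
  also have "\<dots> = g2" using comp_assoc[OF e'(1) e(1) g2] e'(2) g2 e(3) by simp
  finally show ?thesis .
qed

lemma cat_mono_if_kernel_trivial:
  assumes w: "w \<in> hom C E D"
    and ker: "\<And>W x. x \<in> hom C W E \<Longrightarrow> Comp C w x = zero_map W D \<Longrightarrow> x = zero_map W E"
  shows "cat_mono C w"
proof -
  obtain R r1 r2 d where kp: "is_pullback C w w r1 r2" and r1: "r1 \<in> hom C R E" and r2: "r2 \<in> hom C R E"
    and d: "d \<in> hom C E R" "Comp C r1 d = Idt C E" "Comp C r2 d = Idt C E"
    by (rule kernel_pair_exists[OF w])
  have "r1 = r2"
  proof (rule split_epi_section_kernel_jointly_epic[OF r2 d(1) d(3) r1 r2])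
    show "Comp C r1 d = Comp C r2 d" using d by simp
    fix W x assume x: "x \<in> hom C W R" and r2x: "Comp C r2 x = zero_map W E"
    have "Comp C w (Comp C r1 x) = Comp C w (Comp C r2 x)"
      using comp_assoc[OF x r1 w] comp_assoc[OF x r2 w] pullback_commutes[OF kp] by simp
    also have "\<dots> = zero_map W D" using r2x w hom_dom_obj[OF x] by simp
    finally show "Comp C r1 x = Comp C r2 x" using ker[OF comp_in_hom[OF x r1]] r2x by simp
  qed
  show ?thesis
  proof (rule cat_monoI[OF w])
    fix W x y assume "x \<in> hom C W E" "y \<in> hom C W E" "Comp C w x = Comp C w y"
    then obtain h where "Comp C r1 h = x" "Comp C r2 h = y" using pullback_lift[OF kp w w r1] by blast
    then show "x = y" using \<open>r1 = r2\<close> by simp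
  qed
qed

lemma regular_epi_cokernel_of_kernel:
  assumes e: "e \<in> hom C A E" and re: "regular_epi C e"
    and j: "j \<in> hom C K A" and ker: "is_kernel C j e"
    and g: "g \<in> hom C A Z" and gj: "Comp C g j = zero_map K Z"
  shows "\<exists>h \<in> hom C E Z. Comp C h e = g"
proof -
  obtain u v where co: "is_coequalizer C e u v" using re unfolding regular_epi_def by blast
  obtain R r1 r2 d where kp: "is_pullback C e e r1 r2" and r1: "r1 \<in> hom C R A" and r2: "r2 \<in> hom C R A"
    and d: "d \<in> hom C A R" "Comp C r1 d = Idt C A" "Comp C r2 d = Idt C A"
    by (rule kernel_pair_exists[OF e])
  have gr: "Comp C g r1 = Comp C g r2"
  proof (rule split_epi_section_kernel_jointly_epic[OF r2 d(1) d(3) comp_in_hom[OF r1 g] comp_in_hom[OF r2 g]])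
    show "Comp C (Comp C g r1) d = Comp C (Comp C g r2) d"
      using comp_assoc[OF d(1) r1 g] comp_assoc[OF d(1) r2 g] d by simp
    fix W x assume x: "x \<in> hom C W R" and r2x: "Comp C r2 x = zero_map W A"
    have W: "W \<in> Obj C" using x hom_dom_obj by blast
    have "Comp C e (Comp C r1 x) = Comp C e (Comp C r2 x)"
      using comp_assoc[OF x r1 e] comp_assoc[OF x r2 e] pullback_commutes[OF kp] by simp
    also have "\<dots> = zero_map W E" using r2x e W by simp
    finally obtain y where y: "y \<in> hom C W K" "Comp C j y = Comp C r1 x"
      using kernel_lift[OF ker j e comp_in_hom[OF x r1]] by blast
    have "Comp C (Comp C g r1) x = zero_map W Z"
      using comp_assoc[OF x r1 g] comp_assoc[OF y(1) j g] y gj hom_cod_obj[OF g] by simp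
    also have "\<dots> = Comp C (Comp C g r2) x" using comp_assoc[OF x r2 g] r2x g W by simp
    finally show "Comp C (Comp C g r1) x = Comp C (Comp C g r2) x" .
  qed
  have u: "u \<in> hom C (Dom C u) A" and v: "v \<in> hom C (Dom C u) A" and euv: "Comp C e u = Comp C e v"
    using co e unfolding is_coequalizer_def by (auto simp: hom_def)
  obtain a where a: "a \<in> hom C (Dom C u) R" "Comp C r1 a = u" "Comp C r2 a = v"
    using pullback_lift[OF kp e e r1 u v euv] by blast
  have "Comp C g u = Comp C g v" using comp_assoc[OF a(1) r1 g] comp_assoc[OF a(1) r2 g] gr a by simp
  then show ?thesis using coequalizer_factor[OF co e g] by blast
qed

text \<open>With D the object of triples (a, b, c) such that
  s2 a = s2 b and s1 b = s1 c, the subobject T of those triples with (s1 a, s2 c) in the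
  relation contains the section (a, b) \<mapsto> (a, b, b) of the projection D \<rightarrow> P and its pullback
  along the diagonal I \<rightarrow> P, hence is all of D.\<close>
lemma jointly_monic_generic_difunctional:
  assumes s1: "s1 \<in> hom C I X" and s2: "s2 \<in> hom C I X" and jm: "jointly_monic s1 s2"
  obtains P q1 q2 D \<pi> q3 r where
    "is_pullback C s2 s2 q1 q2" "q1 \<in> hom C P I" "q2 \<in> hom C P I"
    "is_pullback C (Comp C s1 q2) s1 \<pi> q3" "\<pi> \<in> hom C D P" "q3 \<in> hom C D I"
    "r \<in> hom C D I" "Comp C s1 r = Comp C s1 (Comp C q1 \<pi>)" "Comp C s2 r = Comp C s2 q3"
proof -
  obtain P q1 q2 \<delta> where kp: "is_pullback C s2 s2 q1 q2" and q1: "q1 \<in> hom C P I" and q2: "q2 \<in> hom C P I"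
    and \<delta>: "\<delta> \<in> hom C I P" "Comp C q1 \<delta> = Idt C I" "Comp C q2 \<delta> = Idt C I"
    by (rule kernel_pair_exists[OF s2])
  have P: "P \<in> Obj C" using q1 hom_dom_obj by blast
  have s1q2: "Comp C s1 q2 \<in> hom C P X" using q2 s1 by blast
  obtain D \<pi> q3 where pbD: "is_pullback C (Comp C s1 q2) s1 \<pi> q3"
    and \<pi>: "\<pi> \<in> hom C D P" and q3: "q3 \<in> hom C D I"
    by (rule pullback_exists[OF s1q2 s1])
  have q1\<pi>: "Comp C q1 \<pi> \<in> hom C D I" using \<pi> q1 by blast
  obtain \<sigma> where \<sigma>: "\<sigma> \<in> hom C P D" "Comp C \<pi> \<sigma> = Idt C P" "Comp C q3 \<sigma> = q2"
    using pullback_lift[OF pbD s1q2 s1 \<pi> id_in_hom[OF P] q2 comp_id_right[OF s1q2]] by blast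
  obtain Q f' p' where pbF: "is_pullback C \<pi> \<delta> f' p'" and f': "f' \<in> hom C Q D" and p': "p' \<in> hom C Q I"
    by (rule pullback_exists[OF \<pi> \<delta>(1)])
  obtain T t r where t: "t \<in> hom C T D" "cat_mono C t" and r: "r \<in> hom C T I"
    and r1: "Comp C s1 r = Comp C (Comp C s1 (Comp C q1 \<pi>)) t"
    and r2: "Comp C s2 r = Comp C (Comp C s2 q3) t"
    and lift: "\<And>W u v. u \<in> hom C W D \<Longrightarrow> v \<in> hom C W I \<Longrightarrow>
       Comp C s1 v = Comp C (Comp C s1 (Comp C q1 \<pi>)) u \<Longrightarrow> Comp C s2 v = Comp C (Comp C s2 q3) u \<Longrightarrow>
       \<exists>h \<in> hom C W T. Comp C t h = u"
    by (rule jointly_monic_preimage[OF s1 s2 jm comp_in_hom[OF q1\<pi> s1] comp_in_hom[OF q3 s2]]) blast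
  have "Comp C (Comp C s1 (Comp C q1 \<pi>)) \<sigma> = Comp C s1 q1"
    using comp_assoc[OF \<sigma>(1) q1\<pi> s1] comp_assoc[OF \<sigma>(1) \<pi> q1] \<sigma>(2) q1 by simp
  moreover have "Comp C (Comp C s2 q3) \<sigma> = Comp C s2 q1"
    using comp_assoc[OF \<sigma>(1) q3 s2] \<sigma>(3) pullback_commutes[OF kp] by simp
  ultimately obtain s0 where s0: "s0 \<in> hom C P T" "Comp C t s0 = \<sigma>" using lift[OF \<sigma>(1) q1] by auto
  have \<pi>f': "Comp C \<pi> f' = Comp C \<delta> p'" using pullback_commutes[OF pbF] .
  have "Comp C s1 (Comp C q3 f') = Comp C (Comp C (Comp C s1 q2) \<pi>) f'"
    using comp_assoc[OF f' q3 s1] pullback_commutes[OF pbD] by simp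
  also have "\<dots> = Comp C s1 p'"
    using comp_assoc[OF f' \<pi> s1q2] comp_assoc[OF comp_in_hom[OF f' \<pi>] q2 s1] \<pi>f'
      comp_assoc[OF p' \<delta>(1) q2] \<delta>(3) p' by simp
  also have "\<dots> = Comp C (Comp C s1 (Comp C q1 \<pi>)) f'"
    using comp_assoc[OF f' q1\<pi> s1] comp_assoc[OF f' \<pi> q1] \<pi>f' comp_assoc[OF p' \<delta>(1) q1] \<delta>(2) p'
    by simp
  finally obtain h where h: "h \<in> hom C Q T" "Comp C t h = f'"
    using lift[OF f' comp_in_hom[OF f' q3]] comp_assoc[OF f' q3 s2] by auto
  have "iso C t" by (rule mono_through_section_and_pullback_iso[OF \<pi> \<sigma>(1,2) \<delta>(1) pbF f' p' t s0 h])
  then obtain t' where t': "t' \<in> hom C D T" "Comp C t t' = Idt C D" using iso_inverse[OF _ t(1)] by blast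
  have "Comp C s1 (Comp C r t') = Comp C s1 (Comp C q1 \<pi>)"
    using comp_assoc[OF t'(1) r s1] r1 comp_assoc[OF t'(1) t(1) comp_in_hom[OF q1\<pi> s1]] t'(2)
      comp_in_hom[OF q1\<pi> s1] by simp
  moreover have "Comp C s2 (Comp C r t') = Comp C s2 q3"
    using comp_assoc[OF t'(1) r s2] r2 comp_assoc[OF t'(1) t(1) comp_in_hom[OF q3 s2]] t'(2)
      comp_in_hom[OF q3 s2] by simp
  ultimately show thesis using that[OF kp q1 q2 pbD \<pi> q3 comp_in_hom[OF t'(1) r]] by blast
qed

lemma jointly_monic_difunctional:
  assumes s1: "s1 \<in> hom C I X" and s2: "s2 \<in> hom C I X" and jm: "jointly_monic s1 s2"
    and a: "a \<in> hom C W I" and b: "b \<in> hom C W I" and c: "c \<in> hom C W I"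
    and ab: "Comp C s2 a = Comp C s2 b" and bc: "Comp C s1 b = Comp C s1 c"
  shows "\<exists>r \<in> hom C W I. Comp C s1 r = Comp C s1 a \<and> Comp C s2 r = Comp C s2 c"
proof -
  obtain P q1 q2 D \<pi> q3 r where kp: "is_pullback C s2 s2 q1 q2" and q1: "q1 \<in> hom C P I"
    and q2: "q2 \<in> hom C P I" and pbD: "is_pullback C (Comp C s1 q2) s1 \<pi> q3"
    and \<pi>: "\<pi> \<in> hom C D P" and q3: "q3 \<in> hom C D I" and r: "r \<in> hom C D I"
    and r1: "Comp C s1 r = Comp C s1 (Comp C q1 \<pi>)" and r2: "Comp C s2 r = Comp C s2 q3"
    by (rule jointly_monic_generic_difunctional[OF s1 s2 jm])
  obtain v where v: "v \<in> hom C W P" "Comp C q1 v = a" "Comp C q2 v = b"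
    using pullback_lift[OF kp s2 s2 q1 a b ab] by blast
  have "Comp C (Comp C s1 q2) v = Comp C s1 c" using comp_assoc[OF v(1) q2 s1] v bc by simp
  then obtain u where u: "u \<in> hom C W D" "Comp C \<pi> u = v" "Comp C q3 u = c"
    using pullback_lift[OF pbD comp_in_hom[OF q2 s1] s1 \<pi> v(1) c] by blast
  have "Comp C s1 (Comp C r u) = Comp C s1 a"
    using comp_assoc[OF u(1) r s1] r1 comp_assoc[OF u(1) comp_in_hom[OF \<pi> q1] s1]
      comp_assoc[OF u(1) \<pi> q1] u v by simp
  moreover have "Comp C s2 (Comp C r u) = Comp C s2 c"
    using comp_assoc[OF u(1) r s2] r2 comp_assoc[OF u(1) q3 s2] u by simp
  ultimately show ?thesis using comp_in_hom[OF u(1) r] by blast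
qed

lemma reflexive_jointly_monic_equiv_rel:
  assumes s1: "s1 \<in> hom C I B" and s2: "s2 \<in> hom C I B" and jm: "jointly_monic s1 s2"
    and d: "d \<in> hom C B I" "Comp C s1 d = Idt C B" "Comp C s2 d = Idt C B"
  shows "equiv_rel C s1 s2"
  unfolding equiv_rel_def
proof (intro conjI ballI impI allI)
  have I: "I \<in> Obj C" using s1 hom_dom_obj by blast
  show "s1 \<in> Arr C" "s2 \<in> Arr C" "Dom C s1 = Dom C s2" "Cod C s1 = Cod C s2"
    using s1 s2 by (auto simp: hom_def)
next
  fix x u v assume "u \<in> hom C x (Dom C s1)" "v \<in> hom C x (Dom C s1)"
    "Comp C s1 u = Comp C s1 v \<and> Comp C s2 u = Comp C s2 v"
  then show "u = v" using jointly_monicD[OF jm s1] s1 by (auto simp: hom_def)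
next
  show "\<exists>d \<in> hom C (Cod C s1) (Dom C s1). Comp C s1 d = Idt C (Cod C s1) \<and> Comp C s2 d = Idt C (Cod C s1)"
    using d s1 by (auto simp: hom_def)
next
  have I: "I \<in> Obj C" using s1 hom_dom_obj by blast
  have "Comp C s2 (Comp C d s2) = Comp C s2 (Idt C I)" using comp_assoc[OF s2 d(1) s2] d(3) s2 by simp
  moreover have "Comp C s1 (Idt C I) = Comp C s1 (Comp C d s1)" using comp_assoc[OF s1 d(1) s1] d(2) s1 by simp
  ultimately obtain t where "t \<in> hom C I I" "Comp C s1 t = Comp C s1 (Comp C d s2)"
      "Comp C s2 t = Comp C s2 (Comp C d s1)"
    using jointly_monic_difunctional[OF s1 s2 jm comp_in_hom[OF s2 d(1)] id_in_hom[OF I] comp_in_hom[OF s1 d(1)]]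
    by blast
  moreover have "Comp C s1 (Comp C d s2) = s2" using comp_assoc[OF s2 d(1) s1] d(2) s2 by simp
  moreover have "Comp C s2 (Comp C d s1) = s1" using comp_assoc[OF s1 d(1) s2] d(3) s1 by simp
  ultimately show "\<exists>s \<in> hom C (Dom C s1) (Dom C s1). Comp C s1 s = s2 \<and> Comp C s2 s = s1"
    using s1 by (auto simp: hom_def)
next
  fix p1 p2 assume pb: "is_pullback C s2 s1 p1 p2"
  then have p1: "p1 \<in> hom C (Dom C p1) I" and p2: "p2 \<in> hom C (Dom C p1) I"
    using s1 s2 unfolding is_pullback_def by (auto simp: hom_def)
  have s2p1: "Comp C s2 p1 \<in> hom C (Dom C p1) B" using p1 s2 by blast
  have "Comp C s2 p1 = Comp C s2 (Comp C d (Comp C s2 p1))"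
    using comp_assoc[OF s2p1 d(1) s2] d(3) s2p1 by simp
  moreover have "Comp C s1 (Comp C d (Comp C s2 p1)) = Comp C s1 p2"
    using comp_assoc[OF s2p1 d(1) s1] d(2) s2p1 pullback_commutes[OF pb] by simp
  ultimately obtain t where "t \<in> hom C (Dom C p1) I" "Comp C s1 t = Comp C s1 p1" "Comp C s2 t = Comp C s2 p2"
    using jointly_monic_difunctional[OF s1 s2 jm p1 comp_in_hom[OF s2p1 d(1)] p2] by blast
  then show "\<exists>t \<in> hom C (Dom C p1) (Dom C s1). Comp C s1 t = Comp C s1 p1 \<and> Comp C s2 t = Comp C s2 p2"
    using s1 by (auto simp: hom_def)
qed

end

locale semi_abelian_category =
  fixes C :: "('o, 'a) cat"
  assumes semi_abelian: "semi_abelian C"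

sublocale semi_abelian_category \<subseteq> pointed_protomodular
  by unfold_locales
    (use semi_abelian in \<open>simp_all add: semi_abelian_def exact_cat_def regular_cat_def\<close>)

sublocale semi_abelian_category \<subseteq> regular_category
  by unfold_locales (use semi_abelian in \<open>simp_all add: semi_abelian_def exact_cat_def\<close>)

context semi_abelian_category
begin

lemma coproduct_exists:
  assumes X: "X \<in> Obj C" and Y: "Y \<in> Obj C"
  obtains S i1 i2 where "coproduct_cocone i1 i2 S X Y"
proof -
  obtain i1 i2 where "i1 \<in> hom C X (Cod C i1)" "i2 \<in> hom C Y (Cod C i2)" and cp: "is_coproduct C i1 i2"
    using semi_abelian X Y unfolding semi_abelian_def has_binary_coproducts_def by blast
  moreover have "Cod C i2 = Cod C i1" using cp unfolding is_coproduct_def by simp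
  ultimately show thesis using that coproduct_cocone_of_is_coproduct by metis
qed

text \<open>The cokernel of m : A \<rightarrow> B is the quotient of B by the equivalence relation generated
  by the pairs (m x, 0): the image of [1, m], [1, 0] : B + A \<rightarrow> B is a reflexive relation,
  hence an equivalence relation, hence effective.\<close>
lemma cokernel_exists:
  assumes m: "m \<in> hom C A B"
  obtains Q q where "is_cokernel q m A B Q"
proof -
  have A: "A \<in> Obj C" and B: "B \<in> Obj C" using m hom_dom_obj hom_cod_obj by blast+
  obtain S i1 i2 where cp: "coproduct_cocone i1 i2 S B A" by (rule coproduct_exists[OF B A])
  have copair: "\<And>u v. u \<in> hom C B B \<Longrightarrow> v \<in> hom C A B \<Longrightarrow>
      \<exists>h \<in> hom C S B. Comp C h i1 = u \<and> Comp C h i2 = v"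
    using cp unfolding coproduct_cocone_def by blast
  obtain a where a: "a \<in> hom C S B" "Comp C a i1 = Idt C B" "Comp C a i2 = m"
    using copair[OF id_in_hom[OF B] m] by blast
  obtain b where b: "b \<in> hom C S B" "Comp C b i1 = Idt C B" "Comp C b i2 = zero_map A B"
    using copair[OF id_in_hom[OF B] zero_map_in_hom[OF A B]] by blast
  obtain I r s1 s2 where r: "r \<in> hom C S I" "epi r" and s1: "s1 \<in> hom C I B" and s2: "s2 \<in> hom C I B"
    and s1r: "Comp C s1 r = a" and s2r: "Comp C s2 r = b" and jm: "jointly_monic s1 s2"
    by (rule jointly_monic_image[OF a(1) b(1)])
  have i1: "i1 \<in> hom C B S" using cp unfolding coproduct_cocone_def by blast
  have "Comp C s1 (Comp C r i1) = Idt C B" "Comp C s2 (Comp C r i1) = Idt C B"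
    using comp_assoc[OF i1 r(1) s1] comp_assoc[OF i1 r(1) s2] s1r s2r a b by simp_all
  then have "equiv_rel C s1 s2"
    using reflexive_jointly_monic_equiv_rel[OF s1 s2 jm comp_in_hom[OF i1 r(1)]] by blast
  then obtain F where "is_pullback C F F s1 s2"
    using semi_abelian unfolding semi_abelian_def exact_cat_def by blast
  then obtain q where co: "is_coequalizer C q s1 s2" using kernel_pair_coequalizer_exists by blast
  then have q: "q \<in> hom C B (Cod C q)" using s1 unfolding is_coequalizer_def by (auto simp: hom_def)
  show thesis
    by (rule that[OF cokernel_from_relation[OF cp m a b r s1 s1r s2 s2r co q]])
qed

lemma induced_map_of_quotients_mono:
  assumes k: "k \<in> hom C A B" "cat_mono C k" and e: "e \<in> hom C A E" "regular_epi C e"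
    and j: "j \<in> hom C K A" "is_kernel C j e"
    and kj: "is_kernel C (Comp C k j) f" and ck: "is_cokernel c (Comp C k j) K B D"
    and w: "w \<in> hom C E D" "Comp C w e = Comp C c k"
  shows "cat_mono C w"
proof (rule cat_mono_if_kernel_trivial[OF w(1)])
  have c: "c \<in> hom C B D" using ck unfolding is_cokernel_def by blast
  fix W x assume x: "x \<in> hom C W E" and wx: "Comp C w x = zero_map W D"
  obtain V e' x' where pb: "is_pullback C x e e' x'" and e': "e' \<in> hom C V W" and x': "x' \<in> hom C V A"
    by (rule pullback_exists[OF x e(1)])
  have xe': "Comp C x e' = Comp C e x'" using pullback_commutes[OF pb] .
  have "Comp C c (Comp C k x') = Comp C w (Comp C x e')"
    using comp_assoc[OF x' k(1) c] w(2) comp_assoc[OF x' e(1) w(1)] xe' by simp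
  also have "\<dots> = zero_map V D" using comp_assoc[OF e' x w(1)] wx e' hom_cod_obj[OF w(1)] by simp
  finally obtain y where y: "y \<in> hom C V K" "Comp C (Comp C k j) y = Comp C k x'"
    using kernel_of_cokernel_lift[OF kj comp_in_hom[OF j(1) k(1)] ck comp_in_hom[OF x' k(1)]] by blast
  have "Comp C j y = x'"
    using cat_monoD[OF k(2) k(1) comp_in_hom[OF y(1) j(1)] x'] comp_assoc[OF y(1) j(1) k(1)] y(2) by simp
  then have "Comp C x e' = zero_map V E"
    using xe' comp_assoc[OF y(1) j(1) e(1)] kernel_comp_zero[OF j(2) j(1) e(1)] y(1) hom_cod_obj[OF e(1)]
    by simp
  then show "x = zero_map W E"
    using epi_comp_zero[OF regular_epi_epi[OF regular_epi_pullback[OF pb e(2)]] e' x] by blast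
qed

lemma normal_mono_comp_if_pushouts_mono:
  assumes H: "\<forall>k e k' e'. normal_mono C k \<and> regular_epi C e \<and> is_pushout C k e k' e' \<longrightarrow> cat_mono C k'"
    and n1: "normal_mono C k1" and n2: "normal_mono C k2" and cd: "Cod C k1 = Dom C k2"
  shows "normal_mono C (Comp C k2 k1)"
proof -
  obtain f1 where ker1: "is_kernel C k1 f1" and k1: "k1 \<in> hom C (Dom C k1) (Cod C k1)"
    by (rule normal_monoE[OF n1])
  obtain f2 where ker2: "is_kernel C k2 f2" and "k2 \<in> hom C (Dom C k2) (Cod C k2)"
    and f2: "f2 \<in> hom C (Cod C k2) (Cod C f2)"
    by (rule normal_monoE[OF n2])
  then have k2: "k2 \<in> hom C (Cod C k1) (Cod C k2)" using cd by simp
  have kk: "Comp C k2 k1 \<in> hom C (Dom C k1) (Cod C k2)" using k1 k2 by blast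
  obtain Q q1 where ck1: "is_cokernel q1 k1 (Dom C k1) (Cod C k1) Q" by (rule cokernel_exists[OF k1])
  obtain D c where ck: "is_cokernel c (Comp C k2 k1) (Dom C k1) (Cod C k2) D" by (rule cokernel_exists[OF kk])
  have q1: "q1 \<in> hom C (Cod C k1) Q" and c: "c \<in> hom C (Cod C k2) D"
    and ckk: "Comp C c (Comp C k2 k1) = zero_map (Dom C k1) D"
    using ck1 ck unfolding is_cokernel_def by auto
  have "Comp C (Comp C c k2) k1 = zero_map (Dom C k1) D" using comp_assoc[OF k1 k2 c] ckk by simp
  then obtain c' where c': "c' \<in> hom C Q D" "Comp C c' q1 = Comp C c k2"
    using cokernel_factor[OF ck1 comp_in_hom[OF k2 c]] by blast
  have "cat_mono C c'"
    using H n2 cokernel_regular_epi[OF ck1] cokernel_comp_pushout[OF k1 k2 ck1 ck c'] by blast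
  obtain t where t: "t \<in> hom C D (Cod C f2)" "Comp C t c = f2"
    using cokernel_factor[OF ck f2] comp_assoc[OF k1 k2 f2] kernel_comp_zero[OF ker2 k2 f2] k1 f2 hom_cod_obj
    by fastforce
  have "is_kernel C (Comp C k2 k1) c"
  proof (rule is_kernelI[OF kk c cat_mono_comp[OF kernel_mono[OF ker1] k1 kernel_mono[OF ker2] k2] ckk])
    fix W g assume g: "g \<in> hom C W (Cod C k2)" and cg: "Comp C c g = zero_map W D"
    have "Comp C f2 g = zero_map W (Cod C f2)" using t comp_assoc[OF g c t(1)] cg hom_dom_obj[OF g] by simp
    then obtain g' where g': "g' \<in> hom C W (Cod C k1)" "Comp C k2 g' = g" using kernel_lift[OF ker2 k2 f2 g] by blast
    have "Comp C c' (Comp C q1 g') = zero_map W D"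
      using comp_assoc[OF g'(1) q1 c'(1)] c'(2) comp_assoc[OF g'(1) k2 c] g' cg by simp
    then have "Comp C q1 g' = zero_map W Q" using cat_mono_comp_zero[OF \<open>cat_mono C c'\<close> c'(1) comp_in_hom[OF g'(1) q1]] by blast
    then obtain y where y: "y \<in> hom C W (Dom C k1)" "Comp C k1 y = g'"
      using kernel_of_cokernel_lift[OF ker1 k1 ck1 g'(1)] by blast
    then show "\<exists>h \<in> hom C W (Dom C k1). Comp C (Comp C k2 k1) h = g" using comp_assoc[OF y(1) k1 k2] g' by auto
  qed
  then show ?thesis unfolding normal_mono_def by blast
qed

lemma pushout_mono_if_normal_mono_comp:
  assumes H: "\<forall>k1 k2. normal_mono C k1 \<and> normal_mono C k2 \<and> Cod C k1 = Dom C k2 \<longrightarrow> normal_mono C (Comp C k2 k1)"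
    and nk: "normal_mono C k" and re: "regular_epi C e" and po: "is_pushout C k e k' e'"
  shows "cat_mono C k'"
proof -
  obtain f where ker: "is_kernel C k f" and k: "k \<in> hom C (Dom C k) (Cod C k)" by (rule normal_monoE[OF nk])
  have e: "e \<in> hom C (Dom C k) (Cod C e)" and k': "k' \<in> hom C (Cod C e) (Cod C k')"
    using po unfolding is_pushout_def by (auto simp: hom_def)
  obtain K j where j: "j \<in> hom C K (Dom C k)" and kerj: "is_kernel C j e" by (rule kernel_exists[OF e])
  have "normal_mono C j" "Cod C j = Dom C k" using kerj j unfolding normal_mono_def by (auto simp: hom_def)
  then have "normal_mono C (Comp C k j)" using H nk by blast
  then obtain f0 where kj: "is_kernel C (Comp C k j) f0" unfolding normal_mono_def by blast
  obtain D c where ck: "is_cokernel c (Comp C k j) K (Cod C k) D" by (rule cokernel_exists[OF comp_in_hom[OF j k]])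
  have c: "c \<in> hom C (Cod C k) D" and ckj: "Comp C c (Comp C k j) = zero_map K D"
    using ck unfolding is_cokernel_def by auto
  have "Comp C (Comp C c k) j = zero_map K D" using comp_assoc[OF j k c] ckj by simp
  then obtain w where w: "w \<in> hom C (Cod C e) D" "Comp C w e = Comp C c k"
    using regular_epi_cokernel_of_kernel[OF e re j kerj comp_in_hom[OF k c]] by blast
  have "cat_mono C w"
    by (rule induced_map_of_quotients_mono[OF k kernel_mono[OF ker] e re j kerj kj ck w])
  moreover obtain h where "h \<in> hom C (Cod C k') D" "Comp C h k' = w"
    using pushout_lift[OF po k e k' c w(1) w(2)[symmetric]] by blast
  ultimately show ?thesis using cat_mono_cancel[OF _ k'] by blast
qed

end

theorem mainTheorem15:
  fixes C :: "('o, 'a) cat"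
  assumes "semi_abelian C"
  shows "(\<forall>k1 k2. normal_mono C k1 \<and> normal_mono C k2 \<and> Cod C k1 = Dom C k2
              \<longrightarrow> normal_mono C (Comp C k2 k1))
         \<longleftrightarrow>
         (\<forall>k e k' e'. normal_mono C k \<and> regular_epi C e \<and> is_pushout C k e k' e'
              \<longrightarrow> cat_mono C k')"
proof -
  interpret semi_abelian_category C by (rule semi_abelian_category.intro) (rule assms)
  show ?thesis
    using normal_mono_comp_if_pushouts_mono pushout_mono_if_normal_mono_comp by blast
qed

end
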